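(* Let $l\in\frac12\mathbb N$, $\mathfrak g=\mathfrak g^{(l)}$, and let $U(\mathfrak g)^{(f)}$ be the localization of $U(\mathfrak g)$ at $\{f^i:i\ge0\}$. For every $x\in\mathbb C$ there is a unique algebra automorphism $\theta_x$ of $U(\mathfrak g)^{(f)}$ such that $\theta_x(f)=f$, $\theta_x(h)=h-2x$, $\theta_x(e)=e+x(h-1-x)f^{-1}$ and $$\theta_x(p_j)=\sum_{k=0}^{2l-j}(-1)^k\binom{x}{k}\frac{(2l-j)!}{(2l-j-k)!}f^{-k}p_{j+k},\qquad j=0,1,\dots,2l.$$
   Context: For $l\in\frac12\mathbb N$, $\mathfrak g^{(l)}$ is the complex Lie algebra with basis $e,h,f,p_0,\dots,p_{2l}$ and brackets $[h,e]=2e$, $[h,f]=-2f$, $[e,f]=h$, $[h,p_k]=2(l-k)p_k$, $[e,p_k]=kp_{k-1}$, $[f,p_k]=(2l-k)p_{k+1}$ ($p_{-1}=p_{2l+1}=0$), $[p_k,p_{k'}]=0$. Since $\mathrm{ad}\,f$ is locally nilpotent on $U(\mathfrak g)$, $\{f^i\}$ is an Ore set. For $x\in\mathbb C$, $\binom{x}{k}=\frac{x(x-1)\cdots(x-k+1)}{k!}$. *)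

theory Defs
  imports Complex_Main "HOL-Algebra.QuotRing"
begin

text \<open>Generators of the algebra: e, h, f, a formal inverse of f, and p_k.
  The parameter n stands for 2l (so l = n/2 ranges over one half of the naturals).\<close>

datatype gen = E | H | F | Finv | P nat

text \<open>Free associative complex algebra on the generators: finitely supported
  functions from words to coefficients, with concatenation-convolution product.\<close>

type_synonym fa = "gen list \<Rightarrow> complex"

definition fa_mult :: "fa \<Rightarrow> fa \<Rightarrow> fa" where
  "fa_mult a b = (\<lambda>w. \<Sum>i\<le>length w. a (take i w) * b (drop i w))"

definition fa_one :: fa where "fa_one = (\<lambda>w. if w = [] then 1 else 0)"

definition fadd :: "fa \<Rightarrow> fa \<Rightarrow> fa" where "fadd a b = (\<lambda>w. a w + b w)"

definition FA :: "fa ring" where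
  "FA = \<lparr>carrier = {a. finite {w. a w \<noteq> 0}}, mult = fa_mult, one = fa_one,
         zero = (\<lambda>w. 0), add = fadd\<rparr>"

definition fsc :: "complex \<Rightarrow> fa \<Rightarrow> fa" where "fsc c a = (\<lambda>w. c * a w)"

definition fsub :: "fa \<Rightarrow> fa \<Rightarrow> fa" where "fsub a b = fadd a (fsc (-1) b)"

definition fsum :: "(nat \<Rightarrow> fa) \<Rightarrow> nat set \<Rightarrow> fa" where
  "fsum t A = (\<lambda>w. \<Sum>k\<in>A. t k w)"

definition fpow :: "fa \<Rightarrow> nat \<Rightarrow> fa" where "fpow a k = ((fa_mult a) ^^ k) fa_one"

definition scal :: "complex \<Rightarrow> fa" where "scal c = fsc c fa_one"

definition gn :: "gen \<Rightarrow> fa" where "gn g = (\<lambda>w. if w = [g] then 1 else 0)"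

definition fcomm :: "fa \<Rightarrow> fa \<Rightarrow> fa" where "fcomm a b = fsub (fa_mult a b) (fa_mult b a)"

text \<open>Defining relations of U(g^(l)) with n = 2l, together with f * finv = finv * f = 1
  (adjoining an inverse of f), and p_k = 0 for k > 2l (only p_0..p_{2l} are generators).\<close>

definition rels :: "nat \<Rightarrow> fa set" where
  "rels n =
     {fsub (fcomm (gn H) (gn E)) (fsc 2 (gn E)),
      fadd (fcomm (gn H) (gn F)) (fsc 2 (gn F)),
      fsub (fcomm (gn E) (gn F)) (gn H),
      fsub (fa_mult (gn F) (gn Finv)) fa_one,
      fsub (fa_mult (gn Finv) (gn F)) fa_one}
   \<union> {fsub (fcomm (gn H) (gn (P k))) (fsc (of_nat n - 2 * of_nat k) (gn (P k))) | k. k \<le> n}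
   \<union> {fsub (fcomm (gn E) (gn (P k))) (fsc (of_nat k) (gn (P (k - 1)))) | k. k \<le> n}
   \<union> {fsub (fcomm (gn F) (gn (P k))) (fsc (of_nat (n - k)) (gn (P (k + 1)))) | k. k \<le> n}
   \<union> {fcomm (gn (P k)) (gn (P k')) | k k'. k \<le> n \<and> k' \<le> n}
   \<union> {gn (P k) | k. n < k}"

definition Jn :: "nat \<Rightarrow> fa set" where "Jn n = genideal FA (rels n)"

text \<open>The localization U(g)^(f), realised as the quotient of the free algebra by Jn.\<close>

definition Uf :: "nat \<Rightarrow> fa set ring" where "Uf n = FA Quot (Jn n)"

definition cls :: "nat \<Rightarrow> fa \<Rightarrow> fa set" where "cls n a = a_r_coset FA (Jn n) a"

definition alg_aut :: "nat \<Rightarrow> (fa set \<Rightarrow> fa set) \<Rightarrow> bool" where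
  "alg_aut n \<theta> \<longleftrightarrow> \<theta> \<in> ring_iso (Uf n) (Uf n) \<and> (\<forall>c. \<theta> (cls n (scal c)) = cls n (scal c))"

definition theta_prop :: "nat \<Rightarrow> complex \<Rightarrow> (fa set \<Rightarrow> fa set) \<Rightarrow> bool" where
  "theta_prop n x \<theta> \<longleftrightarrow>
     \<theta> (cls n (gn F)) = cls n (gn F) \<and>
     \<theta> (cls n (gn H)) = cls n (fsub (gn H) (scal (2 * x))) \<and>
     \<theta> (cls n (gn E)) = cls n (fadd (gn E)
        (fsc x (fa_mult (fsub (gn H) (scal (1 + x))) (gn Finv)))) \<and>
     (\<forall>j\<le>n. \<theta> (cls n (gn (P j))) = cls n
        (fsum (\<lambda>k. fsc ((-1) ^ k * (x gchoose k) * (fact (n - j) / fact (n - j - k)))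
                      (fa_mult (fpow (gn Finv) k) (gn (P (j + k))))) {0..n - j}))"

end

theory Submission
  imports Defs "HOL-Computational_Algebra.Polynomial"
begin

text \<open>
  Write \<open>\<theta> x g\<close> for the prescribed image of the generator g. For a natural number m,
  \<open>\<theta> m\<close> is conjugation \<open>a \<mapsto> f\<^sup>-\<^sup>m a f\<^sup>m\<close>: modulo the defining relations,
  \<open>f\<^sup>-\<^sup>1 (\<theta> x g) f = \<theta> (x + 1) g\<close> for every generator g and every x (for \<open>p\<^sub>j\<close> this is
  Pascal's rule), and \<open>\<theta> 0\<close> is the identity. Extend \<open>\<theta> x\<close> to the free algebra by
  substitution. The image of a defining relation, and \<open>\<theta> y (\<theta> x a) - \<theta> (x + y) a\<close>, are
  polynomials in the parameters with coefficients in the free algebra. Their values lie in the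
  ideal of relations at all natural parameters, hence so do their coefficients, hence so do all
  their values. So \<open>\<theta> x\<close> descends to an endomorphism of the localization with inverse
  \<open>\<theta> (- x)\<close>. Uniqueness holds because the generators, with \<open>f\<^sup>-\<^sup>1\<close> the inverse of f,
  generate the localization.
\<close>

section \<open>The free algebra\<close>

abbreviation fin_supp :: "fa \<Rightarrow> bool" where "fin_supp a \<equiv> finite {w. a w \<noteq> 0}"

lemma fa_mult_Nil: "fa_mult a b [] = a [] * b []"
  by (simp add: fa_mult_def)

lemma fa_mult_Cons: "fa_mult a b (x # w) = a [] * b (x # w) + fa_mult (\<lambda>u. a (x # u)) b w"
  unfolding fa_mult_def by (simp add: sum.atMost_Suc_shift del: sum.atMost_Suc)

lemma fa_mult_linear_left: "fa_mult (\<lambda>u. k * p u + r u) c w = k * fa_mult p c w + fa_mult r c w"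
  unfolding fa_mult_def by (simp add: sum.distrib sum_distrib_left algebra_simps)

lemma fa_mult_linear_right: "fa_mult c (\<lambda>u. k * p u + r u) w = k * fa_mult c p w + fa_mult c r w"
  unfolding fa_mult_def by (simp add: sum.distrib sum_distrib_left algebra_simps)

lemma fa_mult_assoc: "fa_mult (fa_mult a b) c w = fa_mult a (fa_mult b c) w"
proof (induction w arbitrary: a b c)
  case Nil
  then show ?case by (simp add: fa_mult_Nil)
next
  case (Cons x w)
  have "(\<lambda>u. fa_mult a b (x # u)) = (\<lambda>u. a [] * b (x # u) + fa_mult (\<lambda>u. a (x # u)) b u)"
    by (simp add: fa_mult_Cons)
  then show ?case
    by (simp add: fa_mult_Cons fa_mult_linear_left Cons.IH fa_mult_Nil algebra_simps)
qed

lemma fa_mult_zero_left: "fa_mult (\<lambda>u. 0) b w = 0"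
  by (simp add: fa_mult_def)

lemma fa_mult_zero_right: "fa_mult b (\<lambda>u. 0) w = 0"
  by (simp add: fa_mult_def)

lemma fa_mult_one_left: "fa_mult fa_one a w = a w"
proof (cases w)
  case (Cons x w')
  have "(\<lambda>u. fa_one (x # u)) = (\<lambda>u. 0)" by (simp add: fa_one_def)
  then show ?thesis using Cons by (simp add: fa_mult_Cons fa_mult_zero_left fa_one_def)
qed (simp add: fa_mult_Nil fa_one_def)

lemma fa_mult_one_right: "fa_mult a fa_one w = a w"
  by (induction w arbitrary: a) (simp_all add: fa_mult_Nil fa_mult_Cons fa_one_def)

lemma fa_mult_nonzero_split:
  assumes "fa_mult a b w \<noteq> 0"
  shows "\<exists>u v. w = u @ v \<and> a u \<noteq> 0 \<and> b v \<noteq> 0"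
proof -
  from assms obtain i where "a (take i w) * b (drop i w) \<noteq> 0"
    unfolding fa_mult_def by (meson sum.neutral)
  then show ?thesis by (intro exI[of _ "take i w"] exI[of _ "drop i w"]) auto
qed

lemma fin_supp_fa_mult: "fin_supp a \<Longrightarrow> fin_supp b \<Longrightarrow> fin_supp (fa_mult a b)"
proof -
  assume "fin_supp a" "fin_supp b"
  moreover have "{w. fa_mult a b w \<noteq> 0} \<subseteq> (\<lambda>(u, v). u @ v) ` ({w. a w \<noteq> 0} \<times> {w. b w \<noteq> 0})"
    using fa_mult_nonzero_split by fastforce
  ultimately show ?thesis by (meson finite_SigmaI finite_imageI finite_subset)
qed

lemma fin_supp_add: "fin_supp a \<Longrightarrow> fin_supp b \<Longrightarrow> fin_supp (\<lambda>w. a w + b w)"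
  by (rule finite_subset[of _ "{w. a w \<noteq> 0} \<union> {w. b w \<noteq> 0}"]) auto

lemma fin_supp_scale: "fin_supp a \<Longrightarrow> fin_supp (\<lambda>w. c * a w)"
  by (erule finite_subset[rotated]) auto

lemma fin_supp_fa_one: "fin_supp fa_one"
  by (rule finite_subset[of _ "{[]}"]) (auto simp: fa_one_def)

lemma fin_supp_gn: "fin_supp (gn g)"
  by (rule finite_subset[of _ "{[g]}"]) (auto simp: gn_def)

lemma fin_supp_fadd: "fin_supp a \<Longrightarrow> fin_supp b \<Longrightarrow> fin_supp (fadd a b)"
  by (simp add: fadd_def fin_supp_add)

lemma fin_supp_fsc: "fin_supp a \<Longrightarrow> fin_supp (fsc c a)"
  by (simp add: fsc_def fin_supp_scale)

lemma fin_supp_fsub: "fin_supp a \<Longrightarrow> fin_supp b \<Longrightarrow> fin_supp (fsub a b)"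
  by (simp add: fsub_def fin_supp_fadd fin_supp_fsc)

lemma fin_supp_fcomm: "fin_supp a \<Longrightarrow> fin_supp b \<Longrightarrow> fin_supp (fcomm a b)"
  by (simp add: fcomm_def fin_supp_fsub fin_supp_fa_mult)

lemma fin_supp_scal: "fin_supp (scal c)"
  by (simp add: scal_def fin_supp_fsc fin_supp_fa_one)

lemma fin_supp_fpow: "fin_supp a \<Longrightarrow> fin_supp (fpow a k)"
  by (induction k) (simp_all add: fpow_def fin_supp_fa_one fin_supp_fa_mult)

lemma fin_supp_fsum: "finite A \<Longrightarrow> (\<And>k. k \<in> A \<Longrightarrow> fin_supp (t k)) \<Longrightarrow> fin_supp (fsum t A)"
proof (induction A rule: finite_induct)
  case (insert x A)
  then have "fsum t (insert x A) = (\<lambda>w. t x w + fsum t A w)" by (simp add: fsum_def)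
  then show ?case using insert by (simp add: fin_supp_add)
qed (simp add: fsum_def)

lemmas fin_supp_intros = fin_supp_fadd fin_supp_fsc fin_supp_fsub fin_supp_fcomm fin_supp_scal
  fin_supp_fpow fin_supp_fsum fin_supp_gn fin_supp_fa_one fin_supp_fa_mult

text \<open>The carrier of \<^const>\<open>FA\<close> as a type, so that the class-based ring library applies.\<close>

typedef free_alg = "{a::fa. fin_supp a}"
  morphisms fa_of free_of
  by (rule exI[of _ "\<lambda>w. 0"]) simp

lemma fin_supp_fa_of: "fin_supp (fa_of a)"
  using fa_of by simp

lemma free_alg_eqI: "(\<And>w. fa_of a w = fa_of b w) \<Longrightarrow> a = b"
  by (metis fa_of_inject ext)

instantiation free_alg :: ring_1
begin

definition "0 = free_of (\<lambda>w. 0)"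
definition "1 = free_of fa_one"
definition "a + b = free_of (\<lambda>w. fa_of a w + fa_of b w)"
definition "- a = free_of (\<lambda>w. - fa_of a w)"
definition "a - b = free_of (\<lambda>w. fa_of a w - fa_of b w)"
definition "a * b = free_of (fa_mult (fa_of a) (fa_of b))"

lemma fa_of_zero: "fa_of 0 = (\<lambda>w. 0)"
  by (simp add: zero_free_alg_def free_of_inverse)

lemma fa_of_one: "fa_of 1 = fa_one"
  by (simp add: one_free_alg_def free_of_inverse fin_supp_fa_one)

lemma fa_of_add: "fa_of (a + b) = (\<lambda>w. fa_of a w + fa_of b w)"
  by (simp add: plus_free_alg_def free_of_inverse fin_supp_add fin_supp_fa_of)

lemma fa_of_uminus: "fa_of (- a) = (\<lambda>w. - fa_of a w)"
  using fin_supp_scale[OF fin_supp_fa_of, of "-1" a]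
  by (simp add: uminus_free_alg_def free_of_inverse)

lemma fa_of_diff: "fa_of (a - b) = (\<lambda>w. fa_of a w - fa_of b w)"
  using fin_supp_add[OF fin_supp_fa_of fin_supp_scale[OF fin_supp_fa_of, of "-1"], of a b]
  by (simp add: minus_free_alg_def free_of_inverse)

lemma fa_of_mult: "fa_of (a * b) = fa_mult (fa_of a) (fa_of b)"
  by (simp add: times_free_alg_def free_of_inverse fin_supp_fa_mult fin_supp_fa_of)

instance
proof
  fix a b c :: free_alg
  show "a * b * c = a * (b * c)" by (rule free_alg_eqI) (simp add: fa_of_mult fa_mult_assoc)
  show "1 * a = a" by (rule free_alg_eqI) (simp add: fa_of_mult fa_of_one fa_mult_one_left)
  show "a * 1 = a" by (rule free_alg_eqI) (simp add: fa_of_mult fa_of_one fa_mult_one_right)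
  show "a + b + c = a + (b + c)" by (rule free_alg_eqI) (simp add: fa_of_add)
  show "a + b = b + a" by (rule free_alg_eqI) (simp add: fa_of_add)
  show "0 + a = a" by (rule free_alg_eqI) (simp add: fa_of_add fa_of_zero)
  show "- a + a = 0" by (rule free_alg_eqI) (simp add: fa_of_add fa_of_zero fa_of_uminus)
  show "a - b = a + - b" by (rule free_alg_eqI) (simp add: fa_of_add fa_of_diff fa_of_uminus)
  show "(a + b) * c = a * c + b * c"
    using fa_mult_linear_left[of 1 "fa_of a" "fa_of b"]
    by (intro free_alg_eqI) (simp add: fa_of_add fa_of_mult)
  show "a * (b + c) = a * b + a * c"
    using fa_mult_linear_right[of "fa_of a" 1 "fa_of b"]
    by (intro free_alg_eqI) (simp add: fa_of_add fa_of_mult)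
  have "fa_of (0::free_alg) [] \<noteq> fa_of 1 []" by (simp add: fa_of_zero fa_of_one fa_one_def)
  then show "(0::free_alg) \<noteq> 1" by metis
qed

end

lemma fa_of_sum: "fa_of (sum f A) w = (\<Sum>i\<in>A. fa_of (f i) w)"
  by (induction A rule: infinite_finite_induct) (simp_all add: fa_of_zero fa_of_add)

definition scalar :: "complex \<Rightarrow> free_alg" where "scalar c = free_of (scal c)"

lemma fa_of_scalar: "fa_of (scalar c) = (\<lambda>w. if w = [] then c else 0)"
  by (simp add: scalar_def free_of_inverse fin_supp_scal) (auto simp: scal_def fsc_def fa_one_def)

lemma fa_mult_scalar_left: "fa_mult (\<lambda>w. if w = [] then c else 0) a u = c * a u"
proof -
  have "(\<lambda>w. if w = [] then c else 0) = (\<lambda>w. c * fa_one w + 0 * fa_one w)"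
    by (auto simp: fa_one_def)
  then show ?thesis using fa_mult_linear_left[of c fa_one "\<lambda>w. 0 * fa_one w" a u]
    by (simp add: fa_mult_one_left fa_mult_zero_left)
qed

lemma fa_mult_scalar_right: "fa_mult a (\<lambda>w. if w = [] then c else 0) u = c * a u"
proof -
  have "(\<lambda>w. if w = [] then c else 0) = (\<lambda>w. c * fa_one w + 0 * fa_one w)"
    by (auto simp: fa_one_def)
  then show ?thesis using fa_mult_linear_right[of a c fa_one "\<lambda>w. 0 * fa_one w" u]
    by (simp add: fa_mult_one_right fa_mult_zero_right)
qed

lemma fa_of_scalar_mult: "fa_of (scalar c * a) w = c * fa_of a w"
  by (simp add: fa_of_mult fa_of_scalar fa_mult_scalar_left)

lemma scalar_commute: "a * scalar c = scalar c * a"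
  by (rule free_alg_eqI) (simp add: fa_of_mult fa_of_scalar fa_mult_scalar_left fa_mult_scalar_right)

lemma mult_scalar_left_commute: "a * (scalar c * b) = scalar c * (a * b)"
  by (metis mult.assoc scalar_commute)

lemma scalar_add [simp]: "scalar (c + d) = scalar c + scalar d"
  by (rule free_alg_eqI) (simp add: fa_of_add fa_of_scalar)

lemma scalar_mult [simp]: "scalar (c * d) = scalar c * scalar d"
  by (rule free_alg_eqI) (simp add: fa_of_scalar_mult fa_of_scalar)

lemma scalar_mult_mult: "(scalar c * a) * (scalar d * b) = scalar (c * d) * (a * b)"
  by (metis mult.assoc mult_scalar_left_commute scalar_mult)

lemma scalar_mult_swap: "scalar (c * y) * a = scalar y * (scalar c * a)"
  by (metis mult.assoc mult.commute scalar_mult)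

lemma scalar_mult_diff_mult:
  "scalar c * ((u - scalar d) * v) = scalar c * (u * v) - scalar (c * d) * v"
  by (simp only: left_diff_distrib right_diff_distrib mult.assoc scalar_mult)

lemma scalar_one [simp]: "scalar 1 = 1"
  by (rule free_alg_eqI) (simp add: fa_of_one fa_of_scalar fa_one_def)

lemma scalar_zero [simp]: "scalar 0 = 0"
  by (rule free_alg_eqI) (simp add: fa_of_zero fa_of_scalar)

lemma scalar_uminus [simp]: "scalar (- c) = - scalar c"
  by (rule free_alg_eqI) (simp add: fa_of_uminus fa_of_scalar)

lemma scalar_diff [simp]: "scalar (c - d) = scalar c - scalar d"
  by (rule free_alg_eqI) (simp add: fa_of_diff fa_of_scalar)

lemma scalar_of_nat: "scalar (of_nat k) = of_nat k"
  by (induction k) simp_all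

lemma scalar_sum [simp]: "scalar (sum f A) = (\<Sum>i\<in>A. scalar (f i))"
  by (induction A rule: infinite_finite_induct) simp_all

definition letter :: "gen \<Rightarrow> free_alg" ("\<langle>_\<rangle>") where "\<langle>g\<rangle> = free_of (gn g)"

definition word :: "gen list \<Rightarrow> free_alg" where "word w = prod_list (map letter w)"

lemma fa_of_letter: "fa_of \<langle>g\<rangle> = gn g"
  by (simp add: letter_def free_of_inverse fin_supp_gn)

lemma fa_mult_gn:
  "fa_mult (gn g) b u = (case u of [] \<Rightarrow> 0 | x # u' \<Rightarrow> if x = g then b u' else 0)"
proof (cases u)
  case (Cons x u')
  have "(\<lambda>v. gn g (x # v)) = (\<lambda>v. if v = [] then (if x = g then 1 else 0) else 0)"
    by (auto simp: gn_def)
  then show ?thesis using Cons by (simp add: fa_mult_Cons gn_def fa_mult_scalar_left)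
qed (simp add: fa_mult_Nil gn_def)

lemma fa_of_word: "fa_of (word w) = (\<lambda>u. if u = w then 1 else 0)"
proof (induction w)
  case Nil
  then show ?case by (simp add: word_def fa_of_one fa_one_def)
next
  case (Cons g w)
  have "word (g # w) = \<langle>g\<rangle> * word w" by (simp add: word_def)
  then show ?case using Cons
    by (auto simp: fa_of_mult fa_of_letter fa_mult_gn split: list.splits)
qed

lemma word_Nil: "word [] = 1"
  by (simp add: word_def)

lemma word_Cons: "word (g # w) = \<langle>g\<rangle> * word w"
  by (simp add: word_def)

lemma word_append: "word (u @ v) = word u * word v"
  by (simp add: word_def)

abbreviation support :: "free_alg \<Rightarrow> gen list set" where "support a \<equiv> {w. fa_of a w \<noteq> 0}"

lemma finite_support: "finite (support a)"
  using fin_supp_fa_of by simp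

lemma free_alg_expansion: "a = (\<Sum>w\<in>support a. scalar (fa_of a w) * word w)"
proof (rule free_alg_eqI)
  fix u
  have "fa_of (\<Sum>w\<in>support a. scalar (fa_of a w) * word w) u
      = (\<Sum>w\<in>support a. if u = w then fa_of a w else 0)"
    by (simp add: fa_of_sum fa_of_scalar_mult fa_of_word if_distrib cong: if_cong)
  also have "\<dots> = fa_of a u"
    using finite_support[of a] by (simp add: sum.delta)
  finally show "fa_of a u = fa_of (\<Sum>w\<in>support a. scalar (fa_of a w) * word w) u" by simp
qed

lemma free_alg_mult_expansion:
  "a * b = (\<Sum>u\<in>support a. \<Sum>v\<in>support b. scalar (fa_of a u * fa_of b v) * word (u @ v))"
proof -
  have "a * b = (\<Sum>u\<in>support a. scalar (fa_of a u) * word u) * (\<Sum>v\<in>support b. scalar (fa_of b v) * word v)"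
    using free_alg_expansion[of a] free_alg_expansion[of b] by simp
  also have "\<dots> = (\<Sum>u\<in>support a. \<Sum>v\<in>support b. scalar (fa_of a u) * word u * (scalar (fa_of b v) * word v))"
    by (simp only: sum_product)
  finally show ?thesis by (simp only: scalar_mult_mult word_append)
qed

lemma free_of_eqI: "fa_of a = r \<Longrightarrow> free_of r = a"
  using fa_of_inverse by metis

lemma free_of_fadd: "fin_supp a \<Longrightarrow> fin_supp b \<Longrightarrow> free_of (fadd a b) = free_of a + free_of b"
  by (rule free_of_eqI) (simp add: fa_of_add free_of_inverse fadd_def)

lemma free_of_fsc: "fin_supp a \<Longrightarrow> free_of (fsc c a) = scalar c * free_of a"
  by (rule free_of_eqI) (simp add: fa_of_scalar_mult free_of_inverse fsc_def fun_eq_iff)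

lemma free_of_fsub: "fin_supp a \<Longrightarrow> fin_supp b \<Longrightarrow> free_of (fsub a b) = free_of a - free_of b"
  by (simp add: fsub_def free_of_fadd free_of_fsc fin_supp_fsc)

lemma free_of_fa_mult: "fin_supp a \<Longrightarrow> fin_supp b \<Longrightarrow> free_of (fa_mult a b) = free_of a * free_of b"
  by (rule free_of_eqI) (simp add: fa_of_mult free_of_inverse)

lemma free_of_fcomm:
  "fin_supp a \<Longrightarrow> fin_supp b \<Longrightarrow> free_of (fcomm a b) = free_of a * free_of b - free_of b * free_of a"
  by (simp add: fcomm_def free_of_fsub free_of_fa_mult fin_supp_fa_mult)

lemma free_of_fa_one: "free_of fa_one = 1"
  by (simp add: one_free_alg_def)

lemma free_of_scal: "free_of (scal c) = scalar c"
  by (simp add: scalar_def)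

lemma free_of_gn: "free_of (gn g) = \<langle>g\<rangle>"
  by (simp add: letter_def)

lemma free_of_fpow: "fin_supp a \<Longrightarrow> free_of (fpow a k) = free_of a ^ k"
proof (induction k)
  case (Suc k)
  have "fpow a (Suc k) = fa_mult a (fpow a k)" by (simp add: fpow_def)
  then show ?case using Suc by (simp add: free_of_fa_mult fin_supp_fpow)
qed (simp add: fpow_def free_of_fa_one)

lemma free_of_fsum:
  "finite A \<Longrightarrow> (\<And>k. k \<in> A \<Longrightarrow> fin_supp (t k)) \<Longrightarrow> free_of (fsum t A) = (\<Sum>k\<in>A. free_of (t k))"
  by (rule free_of_eqI) (simp add: fa_of_sum free_of_inverse fsum_def fun_eq_iff)

lemmas free_of_simps = free_of_fadd free_of_fsc free_of_fsub free_of_fa_mult free_of_fcomm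
  free_of_fa_one free_of_scal free_of_gn free_of_fpow free_of_fsum

definition subst :: "(gen \<Rightarrow> free_alg) \<Rightarrow> free_alg \<Rightarrow> free_alg" where
  "subst t a = (\<Sum>w\<in>support a. scalar (fa_of a w) * prod_list (map t w))"

lemma subst_on:
  assumes "finite S" "support a \<subseteq> S"
  shows "subst t a = (\<Sum>w\<in>S. scalar (fa_of a w) * prod_list (map t w))"
  unfolding subst_def by (rule sum.mono_neutral_left[OF assms]) auto

lemma subst_add: "subst t (a + b) = subst t a + subst t b"
proof -
  let ?S = "support a \<union> support b"
  have S: "finite ?S" by (simp add: finite_support)
  have "subst t (a + b) = (\<Sum>w\<in>?S. scalar (fa_of (a + b) w) * prod_list (map t w))"
    by (rule subst_on[OF S]) (auto simp: fa_of_add)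
  also have "\<dots> = (\<Sum>w\<in>?S. scalar (fa_of a w) * prod_list (map t w))
      + (\<Sum>w\<in>?S. scalar (fa_of b w) * prod_list (map t w))"
    by (simp add: fa_of_add sum.distrib distrib_right)
  also have "\<dots> = subst t a + subst t b"
    using subst_on[OF S, of a t] subst_on[OF S, of b t] by auto
  finally show ?thesis .
qed

lemma subst_scalar_mult: "subst t (scalar c * a) = scalar c * subst t a"
proof -
  have "subst t (scalar c * a) = (\<Sum>w\<in>support a. scalar (fa_of (scalar c * a) w) * prod_list (map t w))"
    by (rule subst_on[OF finite_support]) (auto simp: fa_of_scalar_mult)
  then show ?thesis
    by (simp add: fa_of_scalar_mult sum_distrib_left mult.assoc subst_def)
qed

lemma subst_zero: "subst t 0 = 0"
  by (simp add: subst_def fa_of_zero)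

lemma subst_diff: "subst t (a - b) = subst t a - subst t b"
  using subst_add[of t "a - b" b] by (simp add: algebra_simps)

lemma subst_sum: "subst t (sum f A) = (\<Sum>i\<in>A. subst t (f i))"
  by (induction A rule: infinite_finite_induct) (simp_all add: subst_zero subst_add)

lemma subst_sum_list: "subst s (\<Sum>z\<leftarrow>L. f z) = (\<Sum>z\<leftarrow>L. subst s (f z))"
  by (induction L) (simp_all add: subst_zero subst_add)

lemma subst_word: "subst t (word w) = prod_list (map t w)"
  using subst_on[of "{w}" "word w" t] by (simp add: fa_of_word)

lemma subst_mult: "subst t (a * b) = subst t a * subst t b"
proof -
  have "subst t (a * b) = (\<Sum>u\<in>support a. \<Sum>v\<in>support b.
      scalar (fa_of a u * fa_of b v) * prod_list (map t (u @ v)))"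
    by (subst free_alg_mult_expansion) (simp only: subst_sum subst_scalar_mult subst_word)
  also have "\<dots> = (\<Sum>u\<in>support a. \<Sum>v\<in>support b.
      scalar (fa_of a u) * prod_list (map t u) * (scalar (fa_of b v) * prod_list (map t v)))"
    by (simp only: map_append prod_list.append scalar_mult_mult)
  also have "\<dots> = subst t a * subst t b"
    by (simp only: subst_def sum_product)
  finally show ?thesis .
qed

lemma subst_one: "subst t 1 = 1"
  using subst_word[of t "[]"] by (simp add: word_Nil)

lemma subst_scalar: "subst t (scalar c) = scalar c"
  using subst_scalar_mult[of t c 1] by (simp add: subst_one)

lemma subst_letter: "subst t \<langle>g\<rangle> = t g"
  using subst_word[of t "[g]"] by (simp add: word_def)

lemma subst_letter_id: "subst letter a = a"
  using free_alg_expansion[of a] by (simp add: subst_def word_def)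

section \<open>Elements depending polynomially on a parameter\<close>

definition polyfun :: "(complex \<Rightarrow> complex) \<Rightarrow> bool" where
  "polyfun p \<longleftrightarrow> (\<exists>q. p = poly q)"

lemma polyfun_const: "polyfun (\<lambda>x. c)"
  unfolding polyfun_def by (rule exI[of _ "[:c:]"]) (simp add: fun_eq_iff)

lemma polyfun_id: "polyfun (\<lambda>x. x)"
  unfolding polyfun_def by (rule exI[of _ "[:0, 1:]"]) (simp add: fun_eq_iff)

lemma polyfun_add: "polyfun p \<Longrightarrow> polyfun r \<Longrightarrow> polyfun (\<lambda>x. p x + r x)"
proof -
  assume "polyfun p" "polyfun r"
  then obtain q1 q2 where "p = poly q1" "r = poly q2" by (auto simp: polyfun_def)
  then show ?thesis unfolding polyfun_def by (intro exI[of _ "q1 + q2"]) (simp add: fun_eq_iff)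
qed

lemma polyfun_mult: "polyfun p \<Longrightarrow> polyfun r \<Longrightarrow> polyfun (\<lambda>x. p x * r x)"
proof -
  assume "polyfun p" "polyfun r"
  then obtain q1 q2 where "p = poly q1" "r = poly q2" by (auto simp: polyfun_def)
  then show ?thesis unfolding polyfun_def by (intro exI[of _ "q1 * q2"]) (simp add: fun_eq_iff)
qed

lemma polyfun_shift: "polyfun p \<Longrightarrow> polyfun (\<lambda>x. p (x + c))"
proof -
  assume "polyfun p"
  then obtain q where "p = poly q" by (auto simp: polyfun_def)
  then show ?thesis unfolding polyfun_def
    by (intro exI[of _ "pcompose q [:c, 1:]"]) (simp add: fun_eq_iff poly_pcompose add.commute)
qed

lemma polyfun_gchoose: "polyfun (\<lambda>x. x gchoose k)"
  unfolding polyfun_def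
  by (rule exI[of _ "smult (1 / fact k) (\<Prod>i = 0..<k. [:- of_nat i, 1:])"])
    (simp add: fun_eq_iff gbinomial_prod_rev poly_prod)

definition poly_family :: "(complex \<Rightarrow> free_alg) \<Rightarrow> bool" where
  "poly_family u \<longleftrightarrow>
    (\<exists>L. (\<forall>z\<in>set L. polyfun (fst z)) \<and> (\<forall>x. u x = (\<Sum>z\<leftarrow>L. scalar (fst z x) * snd z)))"

lemma poly_family_const: "poly_family (\<lambda>x. a)"
  unfolding poly_family_def by (rule exI[of _ "[(\<lambda>x. 1, a)]"]) (simp add: polyfun_const)

lemma poly_family_scalar: "polyfun p \<Longrightarrow> poly_family (\<lambda>x. scalar (p x))"
  unfolding poly_family_def by (rule exI[of _ "[(p, 1)]"]) simp

lemma poly_family_add: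
  assumes "poly_family u" "poly_family v"
  shows "poly_family (\<lambda>x. u x + v x)"
proof -
  obtain L where L: "\<And>z. z \<in> set L \<Longrightarrow> polyfun (fst z)" "\<And>x. u x = (\<Sum>z\<leftarrow>L. scalar (fst z x) * snd z)"
    using assms(1) unfolding poly_family_def by blast
  obtain M where M: "\<And>z. z \<in> set M \<Longrightarrow> polyfun (fst z)" "\<And>x. v x = (\<Sum>z\<leftarrow>M. scalar (fst z x) * snd z)"
    using assms(2) unfolding poly_family_def by blast
  show ?thesis unfolding poly_family_def
  proof (intro exI conjI allI)
    show "\<forall>z\<in>set (L @ M). polyfun (fst z)" using L(1) M(1) by (simp only: set_append) blast
    show "u x + v x = (\<Sum>z\<leftarrow>L @ M. scalar (fst z x) * snd z)" for x by (simp add: L(2) M(2))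
  qed
qed

lemma poly_family_scalar_mult:
  assumes "polyfun p" "poly_family u"
  shows "poly_family (\<lambda>x. scalar (p x) * u x)"
proof -
  obtain L where L: "\<And>z. z \<in> set L \<Longrightarrow> polyfun (fst z)" "\<And>x. u x = (\<Sum>z\<leftarrow>L. scalar (fst z x) * snd z)"
    using assms(2) unfolding poly_family_def by blast
  show ?thesis unfolding poly_family_def
  proof (intro exI conjI allI ballI)
    let ?L = "map (\<lambda>z. (\<lambda>x. p x * fst z x, snd z)) L"
    show "polyfun (fst z)" if "z \<in> set ?L" for z using that L(1) assms(1) by (auto intro!: polyfun_mult)
    show "scalar (p x) * u x = (\<Sum>z\<leftarrow>?L. scalar (fst z x) * snd z)" for x
      by (simp add: L(2) sum_list_const_mult[symmetric] o_def mult.assoc)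
  qed
qed

lemma poly_family_mult_left:
  assumes "poly_family u"
  shows "poly_family (\<lambda>x. a * u x)"
proof -
  obtain L where L: "\<And>z. z \<in> set L \<Longrightarrow> polyfun (fst z)" "\<And>x. u x = (\<Sum>z\<leftarrow>L. scalar (fst z x) * snd z)"
    using assms unfolding poly_family_def by blast
  show ?thesis unfolding poly_family_def
  proof (intro exI conjI allI ballI)
    let ?L = "map (\<lambda>z. (fst z, a * snd z)) L"
    show "polyfun (fst z)" if "z \<in> set ?L" for z using that L(1) by auto
    show "a * u x = (\<Sum>z\<leftarrow>?L. scalar (fst z x) * snd z)" for x
      by (simp add: L(2) sum_list_const_mult[symmetric] o_def mult_scalar_left_commute
          del: scalar_mult)
  qed
qed

lemma poly_family_sum_list:
  "(\<And>z. z \<in> set L \<Longrightarrow> poly_family (u z)) \<Longrightarrow> poly_family (\<lambda>x. \<Sum>z\<leftarrow>L. u z x)"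
  by (induction L) (simp_all add: poly_family_add poly_family_const)

lemma poly_family_sum:
  "finite A \<Longrightarrow> (\<And>i. i \<in> A \<Longrightarrow> poly_family (u i)) \<Longrightarrow> poly_family (\<lambda>x. \<Sum>i\<in>A. u i x)"
  by (induction A rule: finite_induct) (simp_all add: poly_family_add poly_family_const)

lemma poly_family_mult:
  assumes "poly_family u" "poly_family v"
  shows "poly_family (\<lambda>x. u x * v x)"
proof -
  obtain L where L: "\<And>z. z \<in> set L \<Longrightarrow> polyfun (fst z)" "\<And>x. u x = (\<Sum>z\<leftarrow>L. scalar (fst z x) * snd z)"
    using assms(1) unfolding poly_family_def by blast
  have "poly_family (\<lambda>x. \<Sum>z\<leftarrow>L. scalar (fst z x) * (snd z * v x))"
    using L(1) assms(2)
    by (intro poly_family_sum_list poly_family_scalar_mult poly_family_mult_left) auto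
  moreover have "u x * v x = (\<Sum>z\<leftarrow>L. scalar (fst z x) * (snd z * v x))" for x
    by (simp add: L(2) sum_list_mult_const[symmetric] o_def mult.assoc)
  ultimately show ?thesis by simp
qed

lemma poly_family_diff:
  assumes "poly_family u" "poly_family v"
  shows "poly_family (\<lambda>x. u x - v x)"
  using poly_family_add[OF assms(1) poly_family_scalar_mult[OF polyfun_const assms(2)], of "- 1"]
  by simp

lemma poly_family_shift:
  assumes "poly_family u"
  shows "poly_family (\<lambda>x. u (x + c))"
proof -
  obtain L where L: "\<And>z. z \<in> set L \<Longrightarrow> polyfun (fst z)" "\<And>x. u x = (\<Sum>z\<leftarrow>L. scalar (fst z x) * snd z)"
    using assms unfolding poly_family_def by blast
  show ?thesis unfolding poly_family_def
  proof (intro exI conjI allI ballI)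
    let ?L = "map (\<lambda>z. (\<lambda>x. fst z (x + c), snd z)) L"
    show "polyfun (fst z)" if "z \<in> set ?L" for z using that L(1) by (auto intro!: polyfun_shift)
    show "u (x + c) = (\<Sum>z\<leftarrow>?L. scalar (fst z x) * snd z)" for x
      by (simp add: L(2) o_def)
  qed
qed

lemma poly_family_subst:
  assumes "poly_family u"
  shows "poly_family (\<lambda>x. subst s (u x))"
proof -
  obtain L where L: "\<And>z. z \<in> set L \<Longrightarrow> polyfun (fst z)" "\<And>x. u x = (\<Sum>z\<leftarrow>L. scalar (fst z x) * snd z)"
    using assms unfolding poly_family_def by blast
  show ?thesis unfolding poly_family_def
  proof (intro exI conjI allI ballI)
    let ?L = "map (\<lambda>z. (fst z, subst s (snd z))) L"
    show "polyfun (fst z)" if "z \<in> set ?L" for z using that L(1) by auto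
    show "subst s (u x) = (\<Sum>z\<leftarrow>?L. scalar (fst z x) * snd z)" for x
      by (simp add: L(2) subst_sum_list subst_scalar_mult o_def del: scalar_mult)
  qed
qed

lemma poly_family_subst_param:
  assumes "\<And>g. poly_family (\<lambda>x. t x g)"
  shows "poly_family (\<lambda>x. subst (t x) a)"
proof -
  have "poly_family (\<lambda>x. prod_list (map (t x) w))" for w
    by (induction w) (simp_all add: poly_family_const poly_family_mult assms)
  then show ?thesis
    unfolding subst_def by (intro poly_family_sum finite_support poly_family_mult_left)
qed

lemma power_sum_extend:
  assumes "D \<le> D'"
  shows "(\<Sum>d\<le>D. scalar (x ^ d) * V d) = (\<Sum>d\<le>D'. scalar (x ^ d) * (if d \<le> D then V d else 0))"
proof -
  have "(\<Sum>d\<le>D. scalar (x ^ d) * V d) = (\<Sum>d\<le>D. scalar (x ^ d) * (if d \<le> D then V d else 0))"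
    by (intro sum.cong) auto
  also have "\<dots> = (\<Sum>d\<le>D'. scalar (x ^ d) * (if d \<le> D then V d else 0))"
    using assms by (intro sum.mono_neutral_left) auto
  finally show ?thesis .
qed

lemma power_sum_add:
  assumes "\<exists>D V. \<forall>x. u x = (\<Sum>d\<le>D. scalar (x ^ d) * V d)"
    and "\<exists>D V. \<forall>x. v x = (\<Sum>d\<le>D. scalar (x ^ d) * V d)"
  shows "\<exists>D V. \<forall>x. u x + v x = (\<Sum>d\<le>D. scalar (x ^ d) * V d)"
proof -
  obtain D1 V1 D2 V2 where u: "\<And>x. u x = (\<Sum>d\<le>D1. scalar (x ^ d) * V1 d)"
    and v: "\<And>x. v x = (\<Sum>d\<le>D2. scalar (x ^ d) * V2 d)"
    using assms by blast
  let ?V = "\<lambda>d. (if d \<le> D1 then V1 d else 0) + (if d \<le> D2 then V2 d else 0)"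
  have "u x + v x = (\<Sum>d\<le>max D1 D2. scalar (x ^ d) * ?V d)" for x
  proof -
    have "u x = (\<Sum>d\<le>max D1 D2. scalar (x ^ d) * (if d \<le> D1 then V1 d else 0))"
      unfolding u by (rule power_sum_extend) simp
    moreover have "v x = (\<Sum>d\<le>max D1 D2. scalar (x ^ d) * (if d \<le> D2 then V2 d else 0))"
      unfolding v by (rule power_sum_extend) simp
    ultimately show ?thesis by (simp only: distrib_left sum.distrib)
  qed
  then show ?thesis by (intro exI[of _ "max D1 D2"] exI[of _ ?V] allI)
qed

lemma polyfun_scalar_mult_power_sum:
  assumes "polyfun p"
  shows "\<exists>D V. \<forall>x. scalar (p x) * a = (\<Sum>d\<le>D. scalar (x ^ d) * V d)"
proof -
  obtain q where "p = poly q" using assms by (auto simp: polyfun_def)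
  then have "scalar (p x) * a = (\<Sum>d\<le>degree q. scalar (x ^ d) * (scalar (coeff q d) * a))" for x
    by (simp only: poly_altdef scalar_sum sum_distrib_right scalar_mult_swap)
  then show ?thesis by (intro exI[of _ "degree q"] exI[of _ "\<lambda>d. scalar (coeff q d) * a"] allI)
qed

lemma poly_family_power_sum:
  assumes "poly_family u"
  shows "\<exists>D V. \<forall>x. u x = (\<Sum>d\<le>D. scalar (x ^ d) * V d)"
proof -
  obtain L where L: "\<forall>z\<in>set L. polyfun (fst z)" "\<And>x. u x = (\<Sum>z\<leftarrow>L. scalar (fst z x) * snd z)"
    using assms unfolding poly_family_def by blast
  have "\<exists>D V. \<forall>x. (\<Sum>z\<leftarrow>L. scalar (fst z x) * snd z) = (\<Sum>d\<le>D. scalar (x ^ d) * V d)"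
    using L(1)
  proof (induction L)
    case Nil
    show ?case by (intro exI[of _ 0] exI[of _ "\<lambda>d. 0"]) simp
  next
    case (Cons z L)
    then show ?case
      using power_sum_add[OF polyfun_scalar_mult_power_sum[of "fst z" "snd z"]] by simp
  qed
  then show ?thesis by (simp add: L(2))
qed

lemma power_sum_plus_one_diff:
  "(\<Sum>d\<le>Suc D. scalar ((y + 1) ^ d) * V d) - (\<Sum>d\<le>Suc D. scalar (y ^ d) * V d)
   = (\<Sum>i\<le>D. scalar (y ^ i) * (\<Sum>d = Suc i..Suc D. scalar (of_nat (d choose i)) * V d))"
proof -
  have "(\<Sum>d\<le>Suc D. scalar ((y + 1) ^ d) * V d) - (\<Sum>d\<le>Suc D. scalar (y ^ d) * V d)
      = (\<Sum>d\<le>Suc D. scalar ((y + 1) ^ d - y ^ d) * V d)"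
    by (simp only: sum_subtractf[symmetric] scalar_diff left_diff_distrib)
  also have "\<dots> = (\<Sum>d\<le>Suc D. \<Sum>i<d. scalar (y ^ i) * (scalar (of_nat (d choose i)) * V d))"
  proof (intro sum.cong refl)
    fix d
    have "(y + 1) ^ d = (\<Sum>i<d. of_nat (d choose i) * y ^ i) + y ^ d"
      by (simp add: binomial_ring lessThan_Suc_atMost[symmetric])
    then show "scalar ((y + 1) ^ d - y ^ d) * V d
        = (\<Sum>i<d. scalar (y ^ i) * (scalar (of_nat (d choose i)) * V d))"
      by (simp only: scalar_sum sum_distrib_right scalar_mult_swap add_diff_cancel)
  qed
  also have "\<dots> = (\<Sum>i<Suc D. \<Sum>d = Suc i..Suc D. scalar (y ^ i) * (scalar (of_nat (d choose i)) * V d))"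
    by (rule sum.nested_swap')
  finally show ?thesis
    by (simp only: lessThan_Suc_atMost sum_distrib_left)
qed

definition theta_coeff :: "nat \<Rightarrow> complex \<Rightarrow> nat \<Rightarrow> complex" where
  "theta_coeff N x k = (-1) ^ k * (x gchoose k) * (fact N / fact (N - k))"

lemma theta_coeff_zero_left: "theta_coeff N 0 k = (if k = 0 then 1 else 0)"
  by (simp add: theta_coeff_def gbinomial_0_left)

lemma theta_coeff_plus_one:
  assumes "k \<le> N"
  shows "theta_coeff N (x + 1) k =
    theta_coeff N x k - (if k = 0 then 0 else theta_coeff N x (k - 1) * of_nat (N - (k - 1)))"
proof (cases k)
  case (Suc i)
  define r where "r = (fact N / fact (N - Suc i) :: complex)"
  have "N - i = Suc (N - Suc i)" using assms Suc by simp
  then have "fact (N - i) = (of_nat (N - i) :: complex) * fact (N - Suc i)" by (metis fact_Suc)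
  moreover have "(of_nat (N - i) :: complex) \<noteq> 0" using assms Suc by simp
  moreover have "\<And>a b c :: complex. c \<noteq> 0 \<Longrightarrow> a / (c * b) * c = a / b"
    by (simp add: field_simps)
  ultimately have "fact N / fact (N - i) * of_nat (N - i) = r"
    unfolding r_def by presburger
  then have "theta_coeff N x i * of_nat (N - i) = (-1) ^ i * (x gchoose i) * r"
    by (simp only: theta_coeff_def mult.assoc)
  moreover have "theta_coeff N (x + 1) (Suc i) = (-1) ^ Suc i * ((x gchoose i) + (x gchoose Suc i)) * r"
    unfolding theta_coeff_def r_def gbinomial_Suc_Suc ..
  moreover have "theta_coeff N x (Suc i) = (-1) ^ Suc i * (x gchoose Suc i) * r"
    unfolding theta_coeff_def r_def ..
  ultimately have
    "theta_coeff N (x + 1) (Suc i) = theta_coeff N x (Suc i) - theta_coeff N x i * of_nat (N - i)"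
    by (simp only:) (simp add: algebra_simps)
  then show ?thesis using Suc by simp
qed (simp add: theta_coeff_def)

lemma sum_shift_zero_ends:
  fixes u :: "nat \<Rightarrow> 'a::ab_group_add"
  assumes "u 0 = 0" "u (Suc N) = 0"
  shows "(\<Sum>k = 0..N. u (Suc k)) = (\<Sum>k = 0..N. u k)"
proof -
  have "(\<Sum>k\<le>Suc N. u k) = u 0 + (\<Sum>k\<le>N. u (Suc k))" by (rule sum.atMost_Suc_shift)
  then show ?thesis using assms by (simp add: atLeast0AtMost)
qed

lemma FA_simps:
  "carrier FA = {a. fin_supp a}" "monoid.mult FA = fa_mult" "monoid.one FA = fa_one"
  "ring.zero FA = (\<lambda>w. 0)" "ring.add FA = fadd"
  by (simp_all add: FA_def)

lemma ring_FA: "ring FA"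
proof (rule ringI)
  show "abelian_group FA"
  proof (rule abelian_groupI, simp_all add: FA_simps)
    fix x y z :: fa
    show "fin_supp x \<Longrightarrow> fin_supp y \<Longrightarrow> fin_supp (fadd x y)" by (rule fin_supp_fadd)
    show "fadd (fadd x y) z = fadd x (fadd y z)" by (simp add: fadd_def add.assoc)
    show "fadd x y = fadd y x" by (simp add: fadd_def add.commute)
    show "fadd (\<lambda>w. 0) x = x" by (simp add: fadd_def)
    assume "fin_supp x"
    then show "\<exists>y. fin_supp y \<and> fadd y x = (\<lambda>w. 0)"
      using fin_supp_scale[of x "-1"] by (intro exI[of _ "\<lambda>w. - x w"]) (simp add: fadd_def)
  qed
  show "monoid FA"
    by (rule monoidI) (simp_all add: FA_simps fin_supp_fa_mult fin_supp_fa_one fun_eq_iff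
        fa_mult_assoc fa_mult_one_left fa_mult_one_right)
next
  fix x y z assume "x \<in> carrier FA" "y \<in> carrier FA" "z \<in> carrier FA"
  show "(x \<oplus>\<^bsub>FA\<^esub> y) \<otimes>\<^bsub>FA\<^esub> z = x \<otimes>\<^bsub>FA\<^esub> z \<oplus>\<^bsub>FA\<^esub> y \<otimes>\<^bsub>FA\<^esub> z"
    using fa_mult_linear_left[of 1 x y z] by (simp add: FA_simps fadd_def fun_eq_iff)
  show "z \<otimes>\<^bsub>FA\<^esub> (x \<oplus>\<^bsub>FA\<^esub> y) = z \<otimes>\<^bsub>FA\<^esub> x \<oplus>\<^bsub>FA\<^esub> z \<otimes>\<^bsub>FA\<^esub> y"
    using fa_mult_linear_right[of z 1 x y] by (simp add: FA_simps fadd_def fun_eq_iff)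
qed

interpretation FA: ring FA
  by (rule ring_FA)

lemma fa_of_carrier: "fa_of a \<in> carrier FA"
  by (simp add: FA_simps fin_supp_fa_of)

lemma FA_minus_fa_of: "fa_of a \<ominus>\<^bsub>FA\<^esub> fa_of b = fa_of (a - b)"
proof -
  have "\<ominus>\<^bsub>FA\<^esub> fa_of b = (\<lambda>w. - fa_of b w)"
    using fin_supp_scale[OF fin_supp_fa_of, of "-1" b]
    by (intro FA.minus_equality) (simp_all add: FA_simps fadd_def fin_supp_fa_of)
  then show ?thesis by (simp add: a_minus_def FA_simps fadd_def fa_of_diff)
qed

lemma rels_carrier: "rels n \<subseteq> carrier FA"
  unfolding rels_def FA_simps by (auto intro!: fin_supp_intros)

lemma ideal_Jn: "ideal (Jn n) FA"
  unfolding Jn_def by (rule FA.genideal_ideal[OF rels_carrier])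

lemma rels_subset_Jn: "rels n \<subseteq> Jn n"
  unfolding Jn_def by (rule FA.genideal_self[OF rels_carrier])

lemma cls_ring_hom: "cls n \<in> ring_hom FA (Uf n)"
proof -
  interpret ideal "Jn n" FA by (rule ideal_Jn)
  have "cls n = (+>\<^bsub>FA\<^esub>) (Jn n)" by (simp add: cls_def fun_eq_iff)
  then show ?thesis using rcos_ring_hom by (simp add: Uf_def)
qed

lemma ring_Uf: "ring (Uf n)"
proof -
  interpret ideal "Jn n" FA by (rule ideal_Jn)
  show ?thesis unfolding Uf_def by (rule quotient_is_ring)
qed

context
  fixes n :: nat
begin

definition J :: "free_alg set" where "J = {a. fa_of a \<in> Jn n}"

interpretation Jn: ideal "Jn n" FA
  by (rule ideal_Jn)

lemma J_add: "a \<in> J \<Longrightarrow> b \<in> J \<Longrightarrow> a + b \<in> J"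
  using Jn.a_closed[of "fa_of a" "fa_of b"] by (simp add: J_def fa_of_add FA_simps fadd_def)

lemma J_mult_left: "a \<in> J \<Longrightarrow> b * a \<in> J"
  using Jn.I_l_closed[of "fa_of a" "fa_of b"] by (simp add: J_def fa_of_mult fin_supp_fa_of FA_simps)

lemma J_mult_right: "a \<in> J \<Longrightarrow> a * b \<in> J"
  using Jn.I_r_closed[of "fa_of a" "fa_of b"] by (simp add: J_def fa_of_mult fin_supp_fa_of FA_simps)

lemma J_zero: "0 \<in> J"
  using Jn.zero_closed by (simp add: J_def fa_of_zero FA_simps)

lemma J_diff: "a \<in> J \<Longrightarrow> b \<in> J \<Longrightarrow> a - b \<in> J"
  using J_add[of a "(- 1) * b"] J_mult_left[of b "- 1"] by simp

lemma J_sum: "(\<And>i. i \<in> A \<Longrightarrow> f i \<in> J) \<Longrightarrow> sum f A \<in> J"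
  by (induction A rule: infinite_finite_induct) (simp_all add: J_zero J_add)

lemma free_of_rel_in_J: "r \<in> rels n \<Longrightarrow> free_of r \<in> J"
proof -
  assume r: "r \<in> rels n"
  then have "fin_supp r" using rels_carrier[of n] by (auto simp: FA_simps)
  then show ?thesis using r rels_subset_Jn[of n] by (auto simp: J_def free_of_inverse)
qed

definition congJ :: "free_alg \<Rightarrow> free_alg \<Rightarrow> bool" (infix "\<approx>" 50)
  where "a \<approx> b \<longleftrightarrow> a - b \<in> J"

lemma congJ_refl [simp]: "a \<approx> a"
  by (simp add: congJ_def J_zero)

lemma congJ_sym: "a \<approx> b \<Longrightarrow> b \<approx> a"
  using J_diff[OF J_zero, of "a - b"] by (simp add: congJ_def)

lemma congJ_trans [trans]: "a \<approx> b \<Longrightarrow> b \<approx> c \<Longrightarrow> a \<approx> c"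
  using J_add[of "a - b" "b - c"] by (simp add: congJ_def)

lemma congJ_add: "a \<approx> a' \<Longrightarrow> b \<approx> b' \<Longrightarrow> a + b \<approx> a' + b'"
  using J_add[of "a - a'" "b - b'"] by (simp add: congJ_def algebra_simps)

lemma congJ_diff: "a \<approx> a' \<Longrightarrow> b \<approx> b' \<Longrightarrow> a - b \<approx> a' - b'"
  using J_diff[of "a - a'" "b - b'"] by (simp add: congJ_def algebra_simps)

lemma congJ_mult: "a \<approx> a' \<Longrightarrow> b \<approx> b' \<Longrightarrow> a * b \<approx> a' * b'"
proof -
  assume "a \<approx> a'" "b \<approx> b'"
  then have "(a - a') * b + a' * (b - b') \<in> J"
    unfolding congJ_def by (intro J_add J_mult_left J_mult_right)
  then show ?thesis by (simp add: congJ_def algebra_simps)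
qed

lemma congJ_mult_left: "b \<approx> b' \<Longrightarrow> a * b \<approx> a * b'"
  by (rule congJ_mult[OF congJ_refl])

lemma congJ_mult_right: "a \<approx> a' \<Longrightarrow> a * b \<approx> a' * b"
  by (rule congJ_mult[OF _ congJ_refl])

lemma congJ_sum: "(\<And>i. i \<in> A \<Longrightarrow> f i \<approx> g i) \<Longrightarrow> sum f A \<approx> sum g A"
  by (induction A rule: infinite_finite_induct) (simp_all add: congJ_add)

lemma congJ_in_J: "a \<approx> b \<Longrightarrow> b \<in> J \<Longrightarrow> a \<in> J"
  using J_add[of "a - b" b] by (simp add: congJ_def)

definition cls_of :: "free_alg \<Rightarrow> fa set" where "cls_of a = cls n (fa_of a)"

lemma cls_of_add: "cls_of (a + b) = cls_of a \<oplus>\<^bsub>Uf n\<^esub> cls_of b"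
  using ring_hom_add[OF cls_ring_hom fa_of_carrier fa_of_carrier]
  by (simp add: cls_of_def fa_of_add FA_simps fadd_def)

lemma cls_of_mult: "cls_of (a * b) = cls_of a \<otimes>\<^bsub>Uf n\<^esub> cls_of b"
  using ring_hom_mult[OF cls_ring_hom fa_of_carrier fa_of_carrier]
  by (simp add: cls_of_def fa_of_mult FA_simps)

lemma cls_of_one: "cls_of 1 = \<one>\<^bsub>Uf n\<^esub>"
  using ring_hom_one[OF cls_ring_hom] by (simp add: cls_of_def fa_of_one FA_simps)

lemma cls_of_zero: "cls_of 0 = \<zero>\<^bsub>Uf n\<^esub>"
  using ring_hom_zero[OF cls_ring_hom ring_FA ring_Uf] by (simp add: cls_of_def fa_of_zero FA_simps)

lemma cls_of_carrier: "cls_of a \<in> carrier (Uf n)"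
  using ring_hom_closed[OF cls_ring_hom fa_of_carrier] by (simp add: cls_of_def)

lemma cls_of_surj: "X \<in> carrier (Uf n) \<Longrightarrow> \<exists>a. X = cls_of a"
proof -
  assume "X \<in> carrier (Uf n)"
  then obtain r where "r \<in> carrier FA" "X = cls n r"
    by (auto simp: Uf_def FactRing_def A_RCOSETS_def' cls_def)
  then have "X = cls_of (free_of r)" by (simp add: cls_of_def free_of_inverse FA_simps)
  then show ?thesis ..
qed

lemma cls_of_eq_iff: "cls_of a = cls_of b \<longleftrightarrow> a \<approx> b"
proof -
  have "cls_of a = cls_of b \<longleftrightarrow> fa_of a \<in> Jn n +>\<^bsub>FA\<^esub> fa_of b"
    unfolding cls_of_def cls_def
    by (metis Jn.a_rcos_self Jn.a_repr_independence' fa_of_carrier)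
  also have "\<dots> \<longleftrightarrow> fa_of a \<ominus>\<^bsub>FA\<^esub> fa_of b \<in> Jn n"
    by (rule Jn.a_rcos_module_minus[OF ring_FA fa_of_carrier fa_of_carrier])
  finally show ?thesis by (simp add: FA_minus_fa_of congJ_def J_def)
qed

section \<open>A polynomial identity principle modulo the ideal\<close>

lemma power_sum_coeffs_in_J:
  assumes "\<And>m::nat. (\<Sum>d\<le>D. scalar (of_nat m ^ d) * V d) \<in> J" and "d \<le> D"
  shows "V d \<in> J"
  using assms
proof (induction D arbitrary: V d)
  case 0
  then show ?case using "0.prems"(1)[of 0] by simp
next
  case (Suc D)
  \<comment> \<open>Differences in m lower the degree; the new top coefficient is \<open>Suc D\<close> times the old one.\<close>
  define W where "W i = (\<Sum>d = Suc i..Suc D. scalar (of_nat (d choose i)) * V d)" for i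
  have "(\<Sum>i\<le>D. scalar (of_nat m ^ i) * W i) \<in> J" for m :: nat
  proof -
    have "of_nat (Suc m) = (of_nat m + 1 :: complex)" by simp
    then have "(\<Sum>d\<le>Suc D. scalar ((of_nat m + 1) ^ d) * V d)
        - (\<Sum>d\<le>Suc D. scalar (of_nat m ^ d) * V d) \<in> J"
      using J_diff[OF Suc.prems(1)[of "Suc m"] Suc.prems(1)[of m]] by (simp only:)
    then show ?thesis unfolding W_def power_sum_plus_one_diff .
  qed
  from Suc.IH[OF this order_refl] have "scalar (of_nat (Suc D)) * V (Suc D) \<in> J"
    by (simp add: W_def)
  from J_mult_left[OF this, of "scalar (1 / of_nat (Suc D))"]
  have top: "V (Suc D) \<in> J"
    by (simp only: mult.assoc[symmetric] scalar_mult[symmetric]) (simp del: of_nat_Suc)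
  have "(\<Sum>d\<le>D. scalar (of_nat m ^ d) * V d) \<in> J" for m :: nat
    using J_diff[OF Suc.prems(1)[of m] J_mult_left[OF top, of "scalar (of_nat m ^ Suc D)"]]
    by simp
  from Suc.IH[OF this] top show ?case
    using Suc.prems(2) by (cases "d = Suc D") simp_all
qed

lemma poly_family_in_J:
  assumes "poly_family u" and "\<And>m::nat. u (of_nat m) \<in> J"
  shows "u x \<in> J"
proof -
  obtain D V where DV: "\<And>x. u x = (\<Sum>d\<le>D. scalar (x ^ d) * V d)"
    using poly_family_power_sum[OF assms(1)] by blast
  have "V d \<in> J" if "d \<le> D" for d
  proof (rule power_sum_coeffs_in_J[OF _ that])
    show "(\<Sum>d\<le>D. scalar (of_nat m ^ d) * V d) \<in> J" for m :: nat
      using assms(2)[of m] by (simp only: DV)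
  qed
  then show ?thesis unfolding DV by (intro J_sum J_mult_left) simp
qed

lemma rel_h_f: "\<langle>H\<rangle> * \<langle>F\<rangle> \<approx> \<langle>F\<rangle> * \<langle>H\<rangle> - scalar 2 * \<langle>F\<rangle>"
proof -
  have "fadd (fcomm (gn H) (gn F)) (fsc 2 (gn F)) \<in> rels n" by (simp add: rels_def)
  from free_of_rel_in_J[OF this] show ?thesis
    by (simp add: congJ_def free_of_simps fin_supp_intros algebra_simps)
qed

lemma rel_e_f: "\<langle>E\<rangle> * \<langle>F\<rangle> \<approx> \<langle>F\<rangle> * \<langle>E\<rangle> + \<langle>H\<rangle>"
proof -
  have "fsub (fcomm (gn E) (gn F)) (gn H) \<in> rels n" by (simp add: rels_def)
  from free_of_rel_in_J[OF this] show ?thesis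
    by (simp add: congJ_def free_of_simps fin_supp_intros algebra_simps)
qed

lemma rel_f_finv: "\<langle>F\<rangle> * \<langle>Finv\<rangle> \<approx> 1"
proof -
  have "fsub (fa_mult (gn F) (gn Finv)) fa_one \<in> rels n" by (simp add: rels_def)
  from free_of_rel_in_J[OF this] show ?thesis
    by (simp add: congJ_def free_of_simps fin_supp_intros)
qed

lemma rel_finv_f: "\<langle>Finv\<rangle> * \<langle>F\<rangle> \<approx> 1"
proof -
  have "fsub (fa_mult (gn Finv) (gn F)) fa_one \<in> rels n" by (simp add: rels_def)
  from free_of_rel_in_J[OF this] show ?thesis
    by (simp add: congJ_def free_of_simps fin_supp_intros)
qed

lemma rel_p_f: "k \<le> n \<Longrightarrow> \<langle>P k\<rangle> * \<langle>F\<rangle> \<approx> \<langle>F\<rangle> * \<langle>P k\<rangle> - of_nat (n - k) * \<langle>P (k + 1)\<rangle>"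
proof -
  assume "k \<le> n"
  then have "fsub (fcomm (gn F) (gn (P k))) (fsc (of_nat (n - k)) (gn (P (k + 1)))) \<in> rels n"
    unfolding rels_def by blast
  from free_of_rel_in_J[OF this]
  have "\<langle>F\<rangle> * \<langle>P k\<rangle> - of_nat (n - k) * \<langle>P (k + 1)\<rangle> \<approx> \<langle>P k\<rangle> * \<langle>F\<rangle>"
    by (simp add: congJ_def free_of_simps fin_supp_intros scalar_of_nat algebra_simps)
  then show ?thesis by (rule congJ_sym)
qed

lemma letter_P_in_J: "n < k \<Longrightarrow> \<langle>P k\<rangle> \<in> J"
proof -
  assume "n < k"
  then have "gn (P k) \<in> rels n" unfolding rels_def by blast
  from free_of_rel_in_J[OF this] show ?thesis by (simp add: free_of_gn)
qed

text \<open>Written exactly as in \<^const>\<open>theta_prop\<close>. The letters \<open>P j\<close> with \<open>n < j\<close>, which are zero in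
  \<^term>\<open>Uf n\<close>, are left fixed.\<close>

definition theta_fa :: "complex \<Rightarrow> gen \<Rightarrow> fa" where
  "theta_fa x g = (case g of
      E \<Rightarrow> fadd (gn E) (fsc x (fa_mult (fsub (gn H) (scal (1 + x))) (gn Finv)))
    | H \<Rightarrow> fsub (gn H) (scal (2 * x))
    | F \<Rightarrow> gn F
    | Finv \<Rightarrow> gn Finv
    | P j \<Rightarrow> if j \<le> n
        then fsum (\<lambda>k. fsc ((-1) ^ k * (x gchoose k) * (fact (n - j) / fact (n - j - k)))
                         (fa_mult (fpow (gn Finv) k) (gn (P (j + k))))) {0..n - j}
        else gn (P j))"

definition theta_gen :: "complex \<Rightarrow> gen \<Rightarrow> free_alg" where
  "theta_gen x g = free_of (theta_fa x g)"

lemma fin_supp_theta_fa: "fin_supp (theta_fa x g)"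
  by (cases g) (auto simp: theta_fa_def intro!: fin_supp_intros)

lemma theta_gen_E: "theta_gen x E = \<langle>E\<rangle> + scalar x * ((\<langle>H\<rangle> - scalar (1 + x)) * \<langle>Finv\<rangle>)"
  by (simp add: theta_gen_def theta_fa_def free_of_simps fin_supp_intros del: scalar_add)

lemma theta_gen_H: "theta_gen x H = \<langle>H\<rangle> - scalar (2 * x)"
  by (simp add: theta_gen_def theta_fa_def free_of_simps fin_supp_intros del: scalar_mult)

lemma theta_gen_F: "theta_gen x F = \<langle>F\<rangle>"
  by (simp add: theta_gen_def theta_fa_def free_of_gn)

lemma theta_gen_Finv: "theta_gen x Finv = \<langle>Finv\<rangle>"
  by (simp add: theta_gen_def theta_fa_def free_of_gn)

lemma theta_gen_P:
  "j \<le> n \<Longrightarrow> theta_gen x (P j) =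
    (\<Sum>k = 0..n - j. scalar (theta_coeff (n - j) x k) * (\<langle>Finv\<rangle> ^ k * \<langle>P (j + k)\<rangle>))"
  by (simp add: theta_gen_def theta_fa_def theta_coeff_def free_of_simps fin_supp_intros
      del: scalar_mult)

lemma theta_gen_P_above: "\<not> j \<le> n \<Longrightarrow> theta_gen x (P j) = \<langle>P j\<rangle>"
  by (simp add: theta_gen_def theta_fa_def free_of_gn)

lemma theta_gen_zero: "theta_gen 0 g = \<langle>g\<rangle>"
proof (cases g)
  case (P j)
  show ?thesis
  proof (cases "j \<le> n")
    case True
    then show ?thesis
      using P by (simp add: theta_gen_P theta_coeff_zero_left sum.atLeast_Suc_atMost)
  qed (simp add: P theta_gen_P_above)
qed (simp_all add: theta_gen_E theta_gen_H theta_gen_F theta_gen_Finv)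

section \<open>Conjugation by \<open>f\<close>\<close>

lemma finv_power_f_power: "\<langle>Finv\<rangle> ^ m * \<langle>F\<rangle> ^ m \<approx> 1"
proof (induction m)
  case (Suc m)
  have "\<langle>Finv\<rangle> ^ Suc m * \<langle>F\<rangle> ^ Suc m = \<langle>Finv\<rangle> ^ m * (\<langle>Finv\<rangle> * \<langle>F\<rangle>) * \<langle>F\<rangle> ^ m"
    unfolding power_Suc2[of "\<langle>Finv\<rangle>"] power_Suc[of "\<langle>F\<rangle>"] by (simp only: mult.assoc)
  also have "\<dots> \<approx> \<langle>Finv\<rangle> ^ m * 1 * \<langle>F\<rangle> ^ m"
    by (intro congJ_mult congJ_refl rel_finv_f)
  finally show ?case using Suc by (simp add: congJ_trans)
qed simp

lemma f_power_finv_power: "\<langle>F\<rangle> ^ m * \<langle>Finv\<rangle> ^ m \<approx> 1"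
proof (induction m)
  case (Suc m)
  have "\<langle>F\<rangle> ^ Suc m * \<langle>Finv\<rangle> ^ Suc m = \<langle>F\<rangle> ^ m * (\<langle>F\<rangle> * \<langle>Finv\<rangle>) * \<langle>Finv\<rangle> ^ m"
    unfolding power_Suc2[of "\<langle>F\<rangle>"] power_Suc[of "\<langle>Finv\<rangle>"] by (simp only: mult.assoc)
  also have "\<dots> \<approx> \<langle>F\<rangle> ^ m * 1 * \<langle>Finv\<rangle> ^ m"
    by (intro congJ_mult congJ_refl rel_f_finv)
  finally show ?case using Suc by (simp add: congJ_trans)
qed simp

lemma mult_finv_f: "a * \<langle>Finv\<rangle> * \<langle>F\<rangle> \<approx> a"
  using congJ_mult_left[OF rel_finv_f, of a] by (simp add: mult.assoc)

lemma finv_f_mult: "\<langle>Finv\<rangle> * \<langle>F\<rangle> * a \<approx> a"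
  using congJ_mult_right[OF rel_finv_f, of a] by simp

lemma finv_power_Suc_f: "\<langle>Finv\<rangle> ^ Suc k * \<langle>F\<rangle> \<approx> \<langle>Finv\<rangle> ^ k"
  unfolding power_Suc2 by (rule mult_finv_f)

lemma finv_h: "\<langle>Finv\<rangle> * (\<langle>H\<rangle> - scalar c) \<approx> (\<langle>H\<rangle> - scalar (c + 2)) * \<langle>Finv\<rangle>"
proof -
  have "\<langle>Finv\<rangle> * \<langle>H\<rangle> \<approx> \<langle>Finv\<rangle> * \<langle>H\<rangle> * (\<langle>F\<rangle> * \<langle>Finv\<rangle>)"
    using congJ_mult_left[OF rel_f_finv, of "\<langle>Finv\<rangle> * \<langle>H\<rangle>"] by (simp add: congJ_sym)
  also have "\<dots> = \<langle>Finv\<rangle> * (\<langle>H\<rangle> * \<langle>F\<rangle>) * \<langle>Finv\<rangle>"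
    by (simp add: mult.assoc)
  also have "\<dots> \<approx> \<langle>Finv\<rangle> * (\<langle>F\<rangle> * \<langle>H\<rangle> - scalar 2 * \<langle>F\<rangle>) * \<langle>Finv\<rangle>"
    by (intro congJ_mult congJ_refl rel_h_f)
  also have "\<dots> = \<langle>Finv\<rangle> * \<langle>F\<rangle> * (\<langle>H\<rangle> * \<langle>Finv\<rangle>) - scalar 2 * (\<langle>Finv\<rangle> * \<langle>F\<rangle> * \<langle>Finv\<rangle>)"
    by (simp only: right_diff_distrib left_diff_distrib mult_scalar_left_commute mult.assoc)
  also have "\<dots> \<approx> 1 * (\<langle>H\<rangle> * \<langle>Finv\<rangle>) - scalar 2 * (1 * \<langle>Finv\<rangle>)"
    by (intro congJ_diff congJ_mult congJ_refl rel_finv_f)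
  finally have "\<langle>Finv\<rangle> * \<langle>H\<rangle> \<approx> (\<langle>H\<rangle> - scalar 2) * \<langle>Finv\<rangle>"
    by (simp add: left_diff_distrib)
  then have "\<langle>Finv\<rangle> * \<langle>H\<rangle> - scalar c * \<langle>Finv\<rangle> \<approx> (\<langle>H\<rangle> - scalar 2) * \<langle>Finv\<rangle> - scalar c * \<langle>Finv\<rangle>"
    by (rule congJ_diff[OF _ congJ_refl])
  then show ?thesis
    by (simp add: right_diff_distrib left_diff_distrib scalar_commute algebra_simps del: scalar_mult)
qed

lemma finv_e_f: "\<langle>Finv\<rangle> * \<langle>E\<rangle> * \<langle>F\<rangle> \<approx> \<langle>E\<rangle> + (\<langle>H\<rangle> - scalar 2) * \<langle>Finv\<rangle>"
proof -
  have "\<langle>Finv\<rangle> * \<langle>E\<rangle> * \<langle>F\<rangle> \<approx> \<langle>Finv\<rangle> * (\<langle>F\<rangle> * \<langle>E\<rangle> + \<langle>H\<rangle>)"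
    unfolding mult.assoc by (intro congJ_mult_left rel_e_f)
  also have "\<dots> = \<langle>Finv\<rangle> * \<langle>F\<rangle> * \<langle>E\<rangle> + \<langle>Finv\<rangle> * (\<langle>H\<rangle> - scalar 0)"
    by (simp add: algebra_simps)
  also have "\<dots> \<approx> 1 * \<langle>E\<rangle> + (\<langle>H\<rangle> - scalar (0 + 2)) * \<langle>Finv\<rangle>"
    by (intro congJ_add congJ_mult_right rel_finv_f finv_h)
  finally show ?thesis by simp
qed

lemma finv_p_f:
  assumes "j + k \<le> n"
  shows "\<langle>Finv\<rangle> * (\<langle>Finv\<rangle> ^ k * \<langle>P (j + k)\<rangle>) * \<langle>F\<rangle> \<approx>
    \<langle>Finv\<rangle> ^ k * \<langle>P (j + k)\<rangle> - scalar (of_nat (n - j - k)) * (\<langle>Finv\<rangle> ^ Suc k * \<langle>P (j + Suc k)\<rangle>)"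
proof -
  have "\<langle>Finv\<rangle> * (\<langle>Finv\<rangle> ^ k * \<langle>P (j + k)\<rangle>) * \<langle>F\<rangle> = \<langle>Finv\<rangle> ^ Suc k * (\<langle>P (j + k)\<rangle> * \<langle>F\<rangle>)"
    by (simp only: mult.assoc power_Suc)
  also have "\<dots> \<approx> \<langle>Finv\<rangle> ^ Suc k * (\<langle>F\<rangle> * \<langle>P (j + k)\<rangle> - of_nat (n - (j + k)) * \<langle>P (j + k + 1)\<rangle>)"
    by (intro congJ_mult_left rel_p_f assms)
  also have "\<dots> = \<langle>Finv\<rangle> ^ Suc k * \<langle>F\<rangle> * \<langle>P (j + k)\<rangle>
      - scalar (of_nat (n - j - k)) * (\<langle>Finv\<rangle> ^ Suc k * \<langle>P (j + Suc k)\<rangle>)"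
    by (simp add: right_diff_distrib mult.assoc scalar_of_nat mult_of_nat_commute)
  also have "\<dots> \<approx> \<langle>Finv\<rangle> ^ k * \<langle>P (j + k)\<rangle>
      - scalar (of_nat (n - j - k)) * (\<langle>Finv\<rangle> ^ Suc k * \<langle>P (j + Suc k)\<rangle>)"
    by (intro congJ_diff congJ_mult_right congJ_refl finv_power_Suc_f)
  finally show ?thesis .
qed

lemma finv_conj_theta_E: "\<langle>Finv\<rangle> * theta_gen x E * \<langle>F\<rangle> \<approx> theta_gen (x + 1) E"
proof -
  have "\<langle>Finv\<rangle> * theta_gen x E * \<langle>F\<rangle> =
      \<langle>Finv\<rangle> * \<langle>E\<rangle> * \<langle>F\<rangle> + scalar x * (\<langle>Finv\<rangle> * (\<langle>H\<rangle> - scalar (1 + x)) * \<langle>Finv\<rangle> * \<langle>F\<rangle>)"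
    by (simp only: theta_gen_E distrib_left distrib_right mult_scalar_left_commute mult.assoc)
  also have "\<dots> \<approx> (\<langle>E\<rangle> + (\<langle>H\<rangle> - scalar 2) * \<langle>Finv\<rangle>) + scalar x * (\<langle>Finv\<rangle> * (\<langle>H\<rangle> - scalar (1 + x)))"
    by (intro congJ_add congJ_mult_left finv_e_f mult_finv_f)
  also have "\<dots> \<approx> (\<langle>E\<rangle> + (\<langle>H\<rangle> - scalar 2) * \<langle>Finv\<rangle>) + scalar x * ((\<langle>H\<rangle> - scalar (1 + x + 2)) * \<langle>Finv\<rangle>)"
    by (intro congJ_add congJ_mult_left congJ_refl finv_h)
  also have "\<dots> = theta_gen (x + 1) E"
  proof -
    have "(x + 1) * (1 + (x + 1)) = 2 + x * (1 + x + 2)" by (simp add: algebra_simps)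
    then have "theta_gen (x + 1) E = \<langle>E\<rangle> + (scalar x * (\<langle>H\<rangle> * \<langle>Finv\<rangle>) + \<langle>H\<rangle> * \<langle>Finv\<rangle>)
        - (scalar 2 * \<langle>Finv\<rangle> + scalar (x * (1 + x + 2)) * \<langle>Finv\<rangle>)"
      unfolding theta_gen_E scalar_mult_diff_mult
      by (simp only: scalar_add scalar_one distrib_right mult_1_left add_diff_eq)
    moreover have "\<langle>E\<rangle> + (\<langle>H\<rangle> - scalar 2) * \<langle>Finv\<rangle> + scalar x * ((\<langle>H\<rangle> - scalar (1 + x + 2)) * \<langle>Finv\<rangle>)
        = \<langle>E\<rangle> + (scalar x * (\<langle>H\<rangle> * \<langle>Finv\<rangle>) + \<langle>H\<rangle> * \<langle>Finv\<rangle>)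
          - (scalar 2 * \<langle>Finv\<rangle> + scalar (x * (1 + x + 2)) * \<langle>Finv\<rangle>)"
      unfolding scalar_mult_diff_mult unfolding left_diff_distrib
      by (simp add: algebra_simps del: scalar_add scalar_mult)
    ultimately show ?thesis by (simp only:)
  qed
  finally show ?thesis .
qed

lemma finv_conj_theta_H: "\<langle>Finv\<rangle> * theta_gen x H * \<langle>F\<rangle> \<approx> theta_gen (x + 1) H"
proof -
  have "\<langle>Finv\<rangle> * theta_gen x H * \<langle>F\<rangle> \<approx> (\<langle>H\<rangle> - scalar (2 * x + 2)) * \<langle>Finv\<rangle> * \<langle>F\<rangle>"
    unfolding theta_gen_H by (intro congJ_mult_right finv_h)
  also have "\<dots> \<approx> \<langle>H\<rangle> - scalar (2 * x + 2)"
    by (rule mult_finv_f)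
  finally show ?thesis
    by (simp add: theta_gen_H algebra_simps del: scalar_add scalar_mult)
qed

lemma finv_conj_theta_P:
  assumes "j \<le> n"
  shows "\<langle>Finv\<rangle> * theta_gen x (P j) * \<langle>F\<rangle> \<approx> theta_gen (x + 1) (P j)"
proof -
  define N where "N = n - j"
  define G where "G k = \<langle>Finv\<rangle> ^ k * \<langle>P (j + k)\<rangle>" for k
  define c where "c k = theta_coeff N x k" for k
  define b where "b k = (if k = 0 then 0 else c (k - 1) * of_nat (N - (k - 1)))" for k
  have "\<langle>Finv\<rangle> * theta_gen x (P j) * \<langle>F\<rangle> = (\<Sum>k = 0..N. scalar (c k) * (\<langle>Finv\<rangle> * G k * \<langle>F\<rangle>))"
    using assms
    by (simp add: theta_gen_P N_def G_def c_def sum_distrib_left sum_distrib_right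
        mult_scalar_left_commute mult.assoc del: scalar_mult)
  also have "\<dots> \<approx> (\<Sum>k = 0..N. scalar (c k) * (G k - scalar (of_nat (N - k)) * G (Suc k)))"
    using assms finv_p_f by (intro congJ_sum congJ_mult_left) (simp add: G_def N_def)
  also have "\<dots> = (\<Sum>k = 0..N. scalar (c k) * G k) - (\<Sum>k = 0..N. scalar (b (Suc k)) * G (Suc k))"
  proof -
    have "scalar (c k) * (G k - scalar (of_nat (N - k)) * G (Suc k))
        = scalar (c k) * G k - scalar (b (Suc k)) * G (Suc k)" for k
      by (simp only: right_diff_distrib mult.assoc[symmetric] scalar_mult[symmetric]) (simp add: b_def)
    then show ?thesis by (simp only: sum_subtractf)
  qed
  also have "(\<Sum>k = 0..N. scalar (b (Suc k)) * G (Suc k)) = (\<Sum>k = 0..N. scalar (b k) * G k)"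
    by (rule sum_shift_zero_ends) (simp_all add: b_def)
  also have "(\<Sum>k = 0..N. scalar (c k) * G k) - (\<Sum>k = 0..N. scalar (b k) * G k)
      = (\<Sum>k = 0..N. scalar (theta_coeff N (x + 1) k) * G k)"
    unfolding sum_subtractf[symmetric]
  proof (intro sum.cong refl)
    fix k assume "k \<in> {0..N}"
    then have "theta_coeff N (x + 1) k = c k - b k"
      by (simp add: b_def c_def theta_coeff_plus_one)
    then show "scalar (c k) * G k - scalar (b k) * G k = scalar (theta_coeff N (x + 1) k) * G k"
      by (simp add: left_diff_distrib)
  qed
  also have "\<dots> = theta_gen (x + 1) (P j)"
    using assms by (simp add: theta_gen_P N_def G_def)
  finally show ?thesis .
qed

lemma finv_conj_theta_gen: "\<langle>Finv\<rangle> * theta_gen x g * \<langle>F\<rangle> \<approx> theta_gen (x + 1) g"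
proof (cases g)
  case (P j)
  show ?thesis
  proof (cases "j \<le> n")
    case False
    then have "\<langle>Finv\<rangle> * \<langle>P j\<rangle> * \<langle>F\<rangle> - \<langle>P j\<rangle> \<in> J"
      by (intro J_diff J_mult_right J_mult_left letter_P_in_J) simp_all
    then show ?thesis using P False by (simp add: theta_gen_P_above congJ_def)
  qed (simp add: P finv_conj_theta_P)
qed (simp_all add: finv_conj_theta_E finv_conj_theta_H theta_gen_F theta_gen_Finv
    finv_f_mult mult_finv_f)

lemma theta_gen_of_nat: "theta_gen (of_nat m) g \<approx> \<langle>Finv\<rangle> ^ m * \<langle>g\<rangle> * \<langle>F\<rangle> ^ m"
proof (induction m)
  case 0
  then show ?case by (simp add: theta_gen_zero)
next
  case (Suc m)
  have "theta_gen (of_nat (Suc m)) g \<approx> \<langle>Finv\<rangle> * theta_gen (of_nat m) g * \<langle>F\<rangle>"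
    using finv_conj_theta_gen[of "of_nat m" g] by (simp add: congJ_sym add.commute)
  also have "\<dots> \<approx> \<langle>Finv\<rangle> * (\<langle>Finv\<rangle> ^ m * \<langle>g\<rangle> * \<langle>F\<rangle> ^ m) * \<langle>F\<rangle>"
    by (intro congJ_mult congJ_refl Suc.IH)
  also have "\<dots> = \<langle>Finv\<rangle> ^ Suc m * \<langle>g\<rangle> * \<langle>F\<rangle> ^ Suc m"
    unfolding power_Suc[of "\<langle>Finv\<rangle>"] power_Suc2[of "\<langle>F\<rangle>"] by (simp only: mult.assoc)
  finally show ?case .
qed

lemma subst_congJ_conj:
  assumes "\<And>g. t g \<approx> v * \<langle>g\<rangle> * u" and "u * v \<approx> 1" and "v * u \<approx> 1"
  shows "subst t a \<approx> v * a * u"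
proof -
  have word: "prod_list (map t w) \<approx> v * word w * u" for w
  proof (induction w)
    case Nil
    show ?case using congJ_sym[OF assms(3)] by (simp add: word_Nil)
  next
    case (Cons g w)
    have "prod_list (map t (g # w)) \<approx> (v * \<langle>g\<rangle> * u) * (v * word w * u)"
      using assms(1) Cons.IH by (simp add: congJ_mult)
    also have "\<dots> = (v * \<langle>g\<rangle>) * (u * v) * (word w * u)"
      by (simp only: mult.assoc)
    also have "\<dots> \<approx> (v * \<langle>g\<rangle>) * 1 * (word w * u)"
      by (intro congJ_mult congJ_refl assms(2))
    finally show ?case by (simp add: word_Cons mult.assoc)
  qed
  have "subst t a = (\<Sum>w\<in>support a. scalar (fa_of a w) * prod_list (map t w))"
    by (rule subst_def)
  also have "\<dots> \<approx> (\<Sum>w\<in>support a. scalar (fa_of a w) * (v * word w * u))"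
    by (intro congJ_sum congJ_mult_left word)
  also have "\<dots> = v * (\<Sum>w\<in>support a. scalar (fa_of a w) * word w) * u"
    by (simp add: sum_distrib_left sum_distrib_right mult_scalar_left_commute mult.assoc
        del: scalar_mult)
  finally show ?thesis by (simp only: free_alg_expansion[of a, symmetric])
qed

lemma subst_theta_of_nat: "subst (theta_gen (of_nat m)) a \<approx> \<langle>Finv\<rangle> ^ m * a * \<langle>F\<rangle> ^ m"
  by (intro subst_congJ_conj theta_gen_of_nat f_power_finv_power finv_power_f_power)

lemma poly_family_theta_gen: "poly_family (\<lambda>x. theta_gen x g)"
proof (cases g)
  case E
  have "poly_family (\<lambda>x. \<langle>E\<rangle> + scalar x * ((\<langle>H\<rangle> - scalar (1 + x)) * \<langle>Finv\<rangle>))"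
    by (intro poly_family_add poly_family_const poly_family_scalar_mult poly_family_mult
        poly_family_diff poly_family_scalar polyfun_id polyfun_add polyfun_const)
  then show ?thesis using E by (simp add: theta_gen_E del: scalar_add scalar_mult)
next
  case H
  have "poly_family (\<lambda>x. \<langle>H\<rangle> - scalar (2 * x))"
    by (intro poly_family_diff poly_family_const poly_family_scalar polyfun_mult polyfun_id polyfun_const)
  then show ?thesis using H by (simp add: theta_gen_H del: scalar_mult)
next
  case (P j)
  show ?thesis
  proof (cases "j \<le> n")
    case True
    have "poly_family (\<lambda>x. \<Sum>k = 0..n - j. scalar (theta_coeff (n - j) x k) * (\<langle>Finv\<rangle> ^ k * \<langle>P (j + k)\<rangle>))"
      unfolding theta_coeff_def
      by (intro poly_family_sum poly_family_scalar_mult poly_family_const polyfun_mult polyfun_const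
          polyfun_gchoose) simp
    then show ?thesis using True P by (simp add: theta_gen_P del: scalar_mult)
  qed (simp add: P theta_gen_P_above poly_family_const)
qed (simp_all add: theta_gen_F theta_gen_Finv poly_family_const)

lemma subst_theta_rel_in_J: "r \<in> rels n \<Longrightarrow> subst (theta_gen x) (free_of r) \<in> J"
proof (rule poly_family_in_J[where u = "\<lambda>x. subst (theta_gen x) (free_of r)"])
  show "poly_family (\<lambda>x. subst (theta_gen x) (free_of r))"
    by (intro poly_family_subst_param poly_family_theta_gen)
  fix m :: nat
  assume "r \<in> rels n"
  then have "\<langle>Finv\<rangle> ^ m * free_of r * \<langle>F\<rangle> ^ m \<in> J"
    by (intro J_mult_left J_mult_right free_of_rel_in_J)
  then show "subst (theta_gen (of_nat m)) (free_of r) \<in> J"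
    by (rule congJ_in_J[OF subst_theta_of_nat])
qed

lemma subst_in_J:
  assumes rels: "\<And>r. r \<in> rels n \<Longrightarrow> subst t (free_of r) \<in> J" and "a \<in> J"
  shows "subst t a \<in> J"
proof -
  define \<phi> where "\<phi> r = fa_of (subst t (free_of r))" for r
  have "\<phi> \<in> ring_hom FA FA"
  proof (rule ring_hom_memI)
    fix r s assume "r \<in> carrier FA" "s \<in> carrier FA"
    then have r: "fin_supp r" and s: "fin_supp s" by (simp_all add: FA_simps)
    show "\<phi> r \<in> carrier FA" by (simp add: \<phi>_def fa_of_carrier)
    show "\<phi> (r \<otimes>\<^bsub>FA\<^esub> s) = \<phi> r \<otimes>\<^bsub>FA\<^esub> \<phi> s"
      using r s by (simp add: \<phi>_def FA_simps free_of_fa_mult subst_mult fa_of_mult)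
    show "\<phi> (r \<oplus>\<^bsub>FA\<^esub> s) = \<phi> r \<oplus>\<^bsub>FA\<^esub> \<phi> s"
      using r s by (simp add: \<phi>_def FA_simps free_of_fadd subst_add) (simp add: fa_of_add fadd_def)
  qed (simp add: \<phi>_def FA_simps free_of_fa_one subst_one fa_of_one)
  then have "ideal {r \<in> carrier FA. \<phi> r \<in> Jn n} FA"
    by (intro ring_hom_ring.ideal_vimage[OF ring_hom_ringI2[OF ring_FA ring_FA]] ideal_Jn)
  moreover have "rels n \<subseteq> {r \<in> carrier FA. \<phi> r \<in> Jn n}"
    using rels rels_carrier[of n] unfolding \<phi>_def J_def by blast
  ultimately have "Jn n \<subseteq> {r \<in> carrier FA. \<phi> r \<in> Jn n}"
    unfolding Jn_def by (rule FA.genideal_minimal)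
  moreover have "fa_of a \<in> Jn n"
    using \<open>a \<in> J\<close> by (simp add: J_def)
  ultimately have "\<phi> (fa_of a) \<in> Jn n" by blast
  then show ?thesis by (simp add: \<phi>_def fa_of_inverse J_def)
qed

lemma congJ_subst_theta: "a \<approx> b \<Longrightarrow> subst (theta_gen x) a \<approx> subst (theta_gen x) b"
  unfolding congJ_def subst_diff[symmetric] by (rule subst_in_J[OF subst_theta_rel_in_J])

definition theta :: "complex \<Rightarrow> fa set \<Rightarrow> fa set" where
  "theta x X = cls_of (subst (theta_gen x) (SOME a. X = cls_of a))"

lemma theta_cls_of: "theta x (cls_of a) = cls_of (subst (theta_gen x) a)"
proof -
  have "cls_of a = cls_of (SOME b. cls_of a = cls_of b)"
    by (rule someI[of "\<lambda>b. cls_of a = cls_of b"]) (rule refl)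
  then have "(SOME b. cls_of a = cls_of b) \<approx> a"
    by (simp add: cls_of_eq_iff congJ_sym)
  then show ?thesis
    unfolding theta_def by (simp add: cls_of_eq_iff congJ_subst_theta)
qed

lemma theta_ring_hom: "theta x \<in> ring_hom (Uf n) (Uf n)"
proof (rule ring_hom_memI)
  fix X Y assume "X \<in> carrier (Uf n)" "Y \<in> carrier (Uf n)"
  then obtain a b where X: "X = cls_of a" and Y: "Y = cls_of b" using cls_of_surj by blast
  show "theta x X \<in> carrier (Uf n)"
    by (simp add: X theta_cls_of cls_of_carrier)
  show "theta x (X \<otimes>\<^bsub>Uf n\<^esub> Y) = theta x X \<otimes>\<^bsub>Uf n\<^esub> theta x Y"
    by (simp add: X Y cls_of_mult[symmetric] theta_cls_of subst_mult)
  show "theta x (X \<oplus>\<^bsub>Uf n\<^esub> Y) = theta x X \<oplus>\<^bsub>Uf n\<^esub> theta x Y"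
    by (simp add: X Y cls_of_add[symmetric] theta_cls_of subst_add)
qed (simp add: cls_of_one[symmetric] theta_cls_of subst_one)

lemma subst_theta_compose_of_nat:
  "subst (theta_gen (of_nat k)) (subst (theta_gen (of_nat m)) a) \<approx> subst (theta_gen (of_nat (m + k))) a"
proof -
  have "subst (theta_gen (of_nat k)) (subst (theta_gen (of_nat m)) a)
      \<approx> \<langle>Finv\<rangle> ^ k * subst (theta_gen (of_nat m)) a * \<langle>F\<rangle> ^ k"
    by (rule subst_theta_of_nat)
  also have "\<dots> \<approx> \<langle>Finv\<rangle> ^ k * (\<langle>Finv\<rangle> ^ m * a * \<langle>F\<rangle> ^ m) * \<langle>F\<rangle> ^ k"
    by (intro congJ_mult congJ_refl subst_theta_of_nat)
  also have "\<dots> = \<langle>Finv\<rangle> ^ (m + k) * a * \<langle>F\<rangle> ^ (m + k)"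
  proof -
    have "\<langle>Finv\<rangle> ^ (m + k) = \<langle>Finv\<rangle> ^ k * \<langle>Finv\<rangle> ^ m"
      by (simp only: power_add add.commute[of m k])
    moreover have "\<langle>F\<rangle> ^ (m + k) = \<langle>F\<rangle> ^ m * \<langle>F\<rangle> ^ k"
      by (rule power_add)
    ultimately show ?thesis by (simp only: mult.assoc)
  qed
  also have "\<dots> \<approx> subst (theta_gen (of_nat (m + k))) a"
    by (rule congJ_sym[OF subst_theta_of_nat])
  finally show ?thesis .
qed

lemma poly_family_subst_theta: "poly_family (\<lambda>x. subst (theta_gen x) a)"
  by (intro poly_family_subst_param poly_family_theta_gen)

text \<open>The composition law is a polynomial identity in each parameter, true at the natural numbers.\<close>

lemma subst_theta_compose_of_nat_left:
  "subst (theta_gen y) (subst (theta_gen (of_nat m)) a) \<approx> subst (theta_gen (of_nat m + y)) a"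
proof -
  let ?u = "\<lambda>y. subst (theta_gen y) (subst (theta_gen (of_nat m)) a) - subst (theta_gen (y + of_nat m)) a"
  have "?u y \<in> J"
  proof (rule poly_family_in_J[where u = ?u])
    show "poly_family ?u"
      by (intro poly_family_diff poly_family_subst_theta
          poly_family_shift[where u = "\<lambda>y. subst (theta_gen y) a"])
    show "?u (of_nat k) \<in> J" for k
      using subst_theta_compose_of_nat[of k m a] by (simp add: congJ_def add.commute)
  qed
  then show ?thesis by (simp add: congJ_def add.commute)
qed

lemma subst_theta_compose:
  "subst (theta_gen y) (subst (theta_gen x) a) \<approx> subst (theta_gen (x + y)) a"
proof -
  let ?u = "\<lambda>x. subst (theta_gen y) (subst (theta_gen x) a) - subst (theta_gen (x + y)) a"
  have "?u x \<in> J"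
  proof (rule poly_family_in_J[where u = ?u])
    show "poly_family ?u"
      by (intro poly_family_diff poly_family_subst poly_family_subst_theta
          poly_family_shift[where u = "\<lambda>x. subst (theta_gen x) a"])
    show "?u (of_nat m) \<in> J" for m
      using subst_theta_compose_of_nat_left[of y m a] by (simp add: congJ_def)
  qed
  then show ?thesis by (simp add: congJ_def)
qed

lemma theta_inverse: "X \<in> carrier (Uf n) \<Longrightarrow> theta (- x) (theta x X) = X"
proof -
  assume "X \<in> carrier (Uf n)"
  then obtain a where a: "X = cls_of a" using cls_of_surj by blast
  have "theta_gen 0 = letter" by (simp add: fun_eq_iff theta_gen_zero)
  then have "subst (theta_gen (- x)) (subst (theta_gen x) a) \<approx> a"
    using subst_theta_compose[of "- x" x a] by (simp add: subst_letter_id)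
  then show ?thesis by (simp add: a theta_cls_of cls_of_eq_iff)
qed

lemma cls_scal: "cls n (scal c) = cls_of (scalar c)"
  by (simp add: cls_of_def scalar_def free_of_inverse fin_supp_scal)

lemma cls_gn: "cls n (gn g) = cls_of \<langle>g\<rangle>"
  by (simp add: cls_of_def fa_of_letter)

lemma alg_aut_theta: "alg_aut n (theta x)"
proof -
  have "bij_betw (theta x) (carrier (Uf n)) (carrier (Uf n))"
    by (rule bij_betwI[where g = "theta (- x)"])
      (use ring_hom_closed[OF theta_ring_hom] theta_inverse theta_inverse[of _ "- x"] in auto)
  then show ?thesis
    using theta_ring_hom
    by (simp add: alg_aut_def ring_iso_def cls_scal theta_cls_of subst_scalar)
qed

lemma theta_prop_theta: "theta_prop n x (theta x)"
proof -
  have "theta x (cls n (gn g)) = cls n (theta_fa x g)" for g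
    by (simp only: cls_gn theta_cls_of subst_letter)
      (simp add: theta_gen_def cls_of_def free_of_inverse fin_supp_theta_fa)
  then show ?thesis by (simp add: theta_prop_def theta_fa_def)
qed

end

section \<open>Uniqueness\<close>

lemma ring_hom_eq_on_generators:
  assumes S: "ring S" and \<sigma>: "\<sigma> \<in> ring_hom (Uf n) S" and \<tau>: "\<tau> \<in> ring_hom (Uf n) S"
    and letter: "\<And>g. \<sigma> (cls_of n \<langle>g\<rangle>) = \<tau> (cls_of n \<langle>g\<rangle>)"
    and scalar: "\<And>c. \<sigma> (cls_of n (scalar c)) = \<tau> (cls_of n (scalar c))"
    and X: "X \<in> carrier (Uf n)"
  shows "\<sigma> X = \<tau> X"
proof -
  have add: "\<sigma> (cls_of n (a + b)) = \<tau> (cls_of n (a + b))"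
    if "\<sigma> (cls_of n a) = \<tau> (cls_of n a)" "\<sigma> (cls_of n b) = \<tau> (cls_of n b)" for a b
    using that by (simp add: cls_of_add ring_hom_add[OF \<sigma>] ring_hom_add[OF \<tau>] cls_of_carrier)
  have mult: "\<sigma> (cls_of n (a * b)) = \<tau> (cls_of n (a * b))"
    if "\<sigma> (cls_of n a) = \<tau> (cls_of n a)" "\<sigma> (cls_of n b) = \<tau> (cls_of n b)" for a b
    using that by (simp add: cls_of_mult ring_hom_mult[OF \<sigma>] ring_hom_mult[OF \<tau>] cls_of_carrier)
  have word: "\<sigma> (cls_of n (word w)) = \<tau> (cls_of n (word w))" for w
  proof (induction w)
    case Nil
    show ?case using ring_hom_one[OF \<sigma>] ring_hom_one[OF \<tau>] by (simp add: word_Nil cls_of_one)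
  qed (simp add: word_Cons mult letter)
  have "\<sigma> (cls_of n (\<Sum>w\<in>W. scalar (c w) * word w)) = \<tau> (cls_of n (\<Sum>w\<in>W. scalar (c w) * word w))"
    if "finite W" for W c
    using that
  proof (induction W rule: finite_induct)
    case empty
    show ?case
      using ring_hom_zero[OF \<sigma> ring_Uf S] ring_hom_zero[OF \<tau> ring_Uf S] by (simp add: cls_of_zero)
  qed (simp add: add mult scalar word)
  moreover obtain a where "X = cls_of n a" using cls_of_surj[OF X] by blast
  ultimately show ?thesis
    using free_alg_expansion[of a] finite_support[of a] by metis
qed

lemma ring_hom_eq_on_finv:
  assumes S: "ring S" and \<sigma>: "\<sigma> \<in> ring_hom (Uf n) S" and \<tau>: "\<tau> \<in> ring_hom (Uf n) S"
    and F: "\<sigma> (cls_of n \<langle>F\<rangle>) = \<tau> (cls_of n \<langle>F\<rangle>)"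
  shows "\<sigma> (cls_of n \<langle>Finv\<rangle>) = \<tau> (cls_of n \<langle>Finv\<rangle>)"
proof -
  have finv_f: "cls_of n \<langle>Finv\<rangle> \<otimes>\<^bsub>Uf n\<^esub> cls_of n \<langle>F\<rangle> = \<one>\<^bsub>Uf n\<^esub>"
    using rel_finv_f[of n] by (simp add: cls_of_eq_iff[symmetric] cls_of_mult cls_of_one)
  have f_finv: "cls_of n \<langle>F\<rangle> \<otimes>\<^bsub>Uf n\<^esub> cls_of n \<langle>Finv\<rangle> = \<one>\<^bsub>Uf n\<^esub>"
    using rel_f_finv[of n] by (simp add: cls_of_eq_iff[symmetric] cls_of_mult cls_of_one)
  show ?thesis
  proof (rule monoid.inv_unique[OF ring.is_monoid[OF S]])
    show "\<sigma> (cls_of n \<langle>Finv\<rangle>) \<otimes>\<^bsub>S\<^esub> \<tau> (cls_of n \<langle>F\<rangle>) = \<one>\<^bsub>S\<^esub>"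
      using ring_hom_mult[OF \<sigma> cls_of_carrier cls_of_carrier] ring_hom_one[OF \<sigma>] finv_f F by metis
    show "\<tau> (cls_of n \<langle>F\<rangle>) \<otimes>\<^bsub>S\<^esub> \<tau> (cls_of n \<langle>Finv\<rangle>) = \<one>\<^bsub>S\<^esub>"
      using ring_hom_mult[OF \<tau> cls_of_carrier cls_of_carrier] ring_hom_one[OF \<tau>] f_finv by metis
  qed (use ring_hom_closed[OF \<sigma> cls_of_carrier] ring_hom_closed[OF \<tau> cls_of_carrier] in auto)
qed

lemma alg_aut_theta_prop_unique:
  assumes "alg_aut n \<sigma>" "theta_prop n x \<sigma>" "alg_aut n \<tau>" "theta_prop n x \<tau>"
    and "X \<in> carrier (Uf n)"
  shows "\<sigma> X = \<tau> X"
proof -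
  have \<sigma>: "\<sigma> \<in> ring_hom (Uf n) (Uf n)" and \<tau>: "\<tau> \<in> ring_hom (Uf n) (Uf n)"
    using assms(1,3) by (simp_all add: alg_aut_def ring_iso_def)
  have P: "\<sigma> (cls_of n \<langle>P j\<rangle>) = \<tau> (cls_of n \<langle>P j\<rangle>)" for j
  proof (cases "j \<le> n")
    case True
    then show ?thesis using assms(2,4) by (simp add: theta_prop_def cls_gn)
  next
    case False
    then have "cls_of n \<langle>P j\<rangle> = \<zero>\<^bsub>Uf n\<^esub>"
      using letter_P_in_J[of n j] by (simp add: cls_of_zero[symmetric] cls_of_eq_iff congJ_def)
    then show ?thesis using ring_hom_zero[OF \<sigma> ring_Uf ring_Uf] ring_hom_zero[OF \<tau> ring_Uf ring_Uf] by simp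
  qed
  have F: "\<sigma> (cls_of n \<langle>F\<rangle>) = \<tau> (cls_of n \<langle>F\<rangle>)"
    using assms(2,4) by (simp add: theta_prop_def cls_gn)
  have "\<sigma> (cls_of n \<langle>g\<rangle>) = \<tau> (cls_of n \<langle>g\<rangle>)" for g
    using assms(2,4) P F ring_hom_eq_on_finv[OF ring_Uf \<sigma> \<tau> F]
    by (cases g) (simp_all add: theta_prop_def cls_gn)
  moreover have "\<sigma> (cls_of n (scalar c)) = \<tau> (cls_of n (scalar c))" for c
    using assms(1,3) by (simp add: alg_aut_def cls_scal)
  ultimately show ?thesis
    using ring_hom_eq_on_generators[OF ring_Uf \<sigma> \<tau>] assms(5) by blast
qed

theorem mainTheorem13:
  fixes n :: nat and x :: complex
  shows "(\<exists>\<theta>. alg_aut n \<theta> \<and> theta_prop n x \<theta>) \<and>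
         (\<forall>\<theta>1 \<theta>2. alg_aut n \<theta>1 \<and> theta_prop n x \<theta>1 \<and> alg_aut n \<theta>2 \<and> theta_prop n x \<theta>2
            \<longrightarrow> (\<forall>X\<in>carrier (Uf n). \<theta>1 X = \<theta>2 X))"
  using alg_aut_theta[of n x] theta_prop_theta[of n x] alg_aut_theta_prop_unique[of n] by blast

end
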